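(* For every $t>0$, $\mathbf R\in S'_{\mathbf R}$ and $\mathbf K\in S'_{\mathbf K}$, the partial Hessians $\nabla^2_{\mathbf x\mathbf x}f_t$ and $\nabla^2_{\mathbf y\mathbf y}f_t$ of $f_t$ are non-singular, where $\mathbf x=\mathrm{veh}(\mathbf R)$ and $\mathbf y=\mathrm{vec}(\mathbf N)$.
   Context: All matrices are real. Fix integers $m,n_1,n_2\ge 1$, $J\ge 0$. Let $\mathbf H_1\in\mathbb R^{n_1\times m}$, $\mathbf H_2\in\mathbb R^{n_2\times m}$, $\mathbf H_{3j}\in\mathbb R^{n_{3j}\times m}$ ($j=1,\dots,J$); $\mathbf W_2=\mathbf H_2^T\mathbf H_2$, $\mathbf W_{3j}=\mathbf H_{3j}^T\mathbf H_{3j}$, $\mathbf H=\begin{bmatrix}\mathbf H_1\\ \mathbf H_2\end{bmatrix}$; $P_T,P_{Ij}>0$. $S'_{\mathbf R}=\{\mathbf R\text{ symmetric}:\mathbf R>0,\ \mathrm{tr}(\mathbf R)<P_T,\ \mathrm{tr}(\mathbf W_{3j}\mathbf R)<P_{Ij}\ \forall j\}$; $S'_{\mathbf K}=\{\mathbf K=\begin{bmatrix}\mathbf I&\mathbf N\\ \mathbf N^T&\mathbf I\end{bmatrix}:\mathbf N\in\mathbb R^{n_1\times n_2},\ \mathbf K>0\}$. $f(\mathbf R,\mathbf K)=\ln|\mathbf I+\mathbf K^{-1}\mathbf H\mathbf R\mathbf H^T|-\ln|\mathbf I+\mathbf W_2\mathbf R|$; for $t>0$, $f_t(\mathbf R,\mathbf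 K)=f(\mathbf R,\mathbf K)+t^{-1}\ln|\mathbf R|+t^{-1}\ln(P_T-\mathrm{tr}\mathbf R)+\sum_j t^{-1}\ln(P_{Ij}-\mathrm{tr}(\mathbf W_{3j}\mathbf R))-t^{-1}\ln|\mathbf K|$. $\mathrm{veh}(\mathbf R)$ is the vector of lower-triangular (including diagonal) entries of $\mathbf R$, $\mathrm{vec}(\mathbf N)$ stacks the columns of $\mathbf N$; $f_t$ is viewed as a function of the independent real variables $\mathbf x,\mathbf y$. *)

theory Defs
  imports "HOL-Analysis.Analysis" "Jordan_Normal_Form.Determinant" "Jordan_Normal_Form.Gauss_Jordan_Elimination"
begin

definition mtrace :: "real mat \<Rightarrow> real" where
  "mtrace A = (\<Sum>i<dim_row A. A $$ (i,i))"

definition pos_def :: "nat \<Rightarrow> real mat \<Rightarrow> bool" where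
  "pos_def n A \<longleftrightarrow> A \<in> carrier_mat n n \<and> transpose_mat A = A \<and>
     (\<forall>v\<in>carrier_vec n. v \<noteq> 0\<^sub>v n \<longrightarrow> v \<bullet> (A *\<^sub>v v) > 0)"

(* matrix inverse (used only for invertible matrices) *)
definition minv :: "real mat \<Rightarrow> real mat" where
  "minv A = the (mat_inverse A)"

definition SR :: "nat \<Rightarrow> real \<Rightarrow> nat \<Rightarrow> (nat \<Rightarrow> real mat) \<Rightarrow> (nat \<Rightarrow> real) \<Rightarrow> real mat set" where
  "SR m PT J W3 PI = {R. pos_def m R \<and> mtrace R < PT \<and>
        (\<forall>j\<in>{1..J}. mtrace (W3 j * R) < PI j)}"

definition Kmat :: "nat \<Rightarrow> nat \<Rightarrow> real mat \<Rightarrow> real mat" where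
  "Kmat n1 n2 N = four_block_mat (1\<^sub>m n1) N (transpose_mat N) (1\<^sub>m n2)"

definition SK :: "nat \<Rightarrow> nat \<Rightarrow> real mat set" where
  "SK n1 n2 = {K. \<exists>N \<in> carrier_mat n1 n2. K = Kmat n1 n2 N \<and> pos_def (n1 + n2) K}"

definition f_obj :: "real mat \<Rightarrow> real mat \<Rightarrow> real mat \<Rightarrow> real mat \<Rightarrow> real" where
  "f_obj H1 H2 R K =
     (let H = H1 @\<^sub>r H2; W2 = transpose_mat H2 * H2 in
      ln (det (1\<^sub>m (dim_row H) + minv K * H * R * transpose_mat H))
      - ln (det (1\<^sub>m (dim_row R) + W2 * R)))"

definition f_bar :: "real mat \<Rightarrow> real mat \<Rightarrow> nat \<Rightarrow> (nat \<Rightarrow> real mat) \<Rightarrow> real \<Rightarrow>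
     (nat \<Rightarrow> real) \<Rightarrow> real \<Rightarrow> real mat \<Rightarrow> real mat \<Rightarrow> real" where
  "f_bar H1 H2 J W3 PT PI t R K =
     f_obj H1 H2 R K + ln (det R) / t + ln (PT - mtrace R) / t
     + (\<Sum>j\<in>{1..J}. ln (PI j - mtrace (W3 j * R)) / t) - ln (det K) / t"

(* veh: lower-triangular entries (incl. diagonal), column by column *)
definition veh_list :: "nat \<Rightarrow> (nat \<times> nat) list" where
  "veh_list m = concat (map (\<lambda>j. map (\<lambda>i. (i,j)) [j..<m]) [0..<m])"

definition veh :: "nat \<Rightarrow> real mat \<Rightarrow> (nat \<Rightarrow> real)" where
  "veh m R k = R $$ (veh_list m ! k)"

(* the symmetric matrix whose veh is x *)
definition mat_of_veh :: "nat \<Rightarrow> (nat \<Rightarrow> real) \<Rightarrow> real mat" where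
  "mat_of_veh m x = mat m m (\<lambda>(i,j). x (THE k. k < length (veh_list m) \<and>
                                         veh_list m ! k = (max i j, min i j)))"

(* vec: column stacking of an n1 x n2 matrix *)
definition vecm :: "nat \<Rightarrow> real mat \<Rightarrow> (nat \<Rightarrow> real)" where
  "vecm n1 N k = N $$ (k mod n1, k div n1)"

definition mat_of_vecm :: "nat \<Rightarrow> nat \<Rightarrow> (nat \<Rightarrow> real) \<Rightarrow> real mat" where
  "mat_of_vecm n1 n2 y = mat n1 n2 (\<lambda>(i,j). y (i + n1 * j))"

definition partial :: "((nat \<Rightarrow> real) \<Rightarrow> real) \<Rightarrow> nat \<Rightarrow> (nat \<Rightarrow> real) \<Rightarrow> real" where
  "partial g i x = deriv (\<lambda>r. g (x(i := x i + r))) 0"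

definition hessian :: "((nat \<Rightarrow> real) \<Rightarrow> real) \<Rightarrow> nat \<Rightarrow> (nat \<Rightarrow> real) \<Rightarrow> real mat" where
  "hessian g d x = mat d d (\<lambda>(i,j). partial (\<lambda>z. partial g i z) j x)"

end

theory Submission
  imports Defs
begin

text \<open>Every term of \<open>f\<^sub>t\<close> is, up to a constant, \<open>c \<cdot> ln (det M)\<close> with \<open>M\<close> an affine function of
  the coordinates, so its second derivative in a direction with \<open>M' = D\<close> is
  \<open>-c \<cdot> tr (M\<inverse> D M\<inverse> D)\<close>, and \<open>tr (P D P D) > 0\<close> for positive definite \<open>P\<close> and symmetric
  \<open>D \<noteq> 0\<close>.

  In the direction \<open>V\<close> of \<open>R\<close> the Hessian form of \<open>f\<^sub>t\<close> is therefore
  \<open>-(tr (\<Sigma>\<inverse> B \<Sigma>\<inverse> B) - tr (\<Sigma>\<^sub>2\<inverse> B\<^sub>2 \<Sigma>\<^sub>2\<inverse> B\<^sub>2) + (tr (R\<inverse> V R\<inverse> V) + squares) / t)\<close> with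
  \<open>\<Sigma> = K + H R H\<^sup>T\<close>, \<open>B = H V H\<^sup>T\<close>, and \<open>\<Sigma>\<^sub>2, B\<^sub>2\<close> their compressions to the \<open>H\<^sub>2\<close>-block
  (the \<open>ln (det (1 + W\<^sub>2 R))\<close> term, rewritten by the push-through identity; the lower right block
  of \<open>K\<close> is the identity). Compression does not increase \<open>tr (\<Sigma>\<inverse> B \<Sigma>\<inverse> B)\<close>, so the form is
  negative definite. In the direction \<open>F = K'\<close> of \<open>N\<close> the form is
  \<open>(1 + 1/t) tr (K\<inverse> F K\<inverse> F) - tr (\<Sigma>\<inverse> F \<Sigma>\<inverse> F)\<close>, positive because adding \<open>H R H\<^sup>T \<succeq> 0\<close> to \<open>K\<close>
  does not increase the trace. A definite Hessian is non-singular.\<close>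

section \<open>Matrix algebra\<close>

lemma assoc_mult_mat_dim:
  fixes A B C :: "'a :: semiring_0 mat"
  assumes "dim_col A = dim_row B" "dim_col B = dim_row C"
  shows "A * B * C = A * (B * C)"
  by (rule assoc_mult_mat[of _ "dim_row A" "dim_col A" _ "dim_col B" _ "dim_col C"])
     (use assms in \<open>auto intro!: carrier_matI\<close>)

lemma mult_smult_distrib_dim:
  fixes A B :: "'a :: comm_ring mat"
  assumes "dim_col A = dim_row B"
  shows "A * (k \<cdot>\<^sub>m B) = k \<cdot>\<^sub>m (A * B)"
  by (rule mult_smult_distrib[of _ "dim_row A" "dim_col A" _ "dim_col B"])
     (use assms in \<open>auto intro!: carrier_matI\<close>)

lemma mult_smult_assoc_dim:
  fixes A B :: "'a :: comm_ring mat"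
  assumes "dim_col A = dim_row B"
  shows "(k \<cdot>\<^sub>m A) * B = k \<cdot>\<^sub>m (A * B)"
  by (rule mult_smult_assoc_mat[of _ "dim_row A" "dim_col A" _ "dim_col B"])
     (use assms in \<open>auto intro!: carrier_matI\<close>)

lemma mult_add_distrib_dim:
  fixes A B C :: "'a :: semiring_0 mat"
  assumes "dim_col A = dim_row B" "dim_row B = dim_row C" "dim_col B = dim_col C"
  shows "A * (B + C) = A * B + A * C"
  by (rule mult_add_distrib_mat[of _ "dim_row A" "dim_col A" _ "dim_col B"])
     (use assms in \<open>auto intro!: carrier_matI\<close>)

lemma add_mult_distrib_dim:
  fixes A B C :: "'a :: semiring_0 mat"
  assumes "dim_col A = dim_row C" "dim_row A = dim_row B" "dim_col A = dim_col B"
  shows "(A + B) * C = A * C + B * C"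
  by (rule add_mult_distrib_mat[of _ "dim_row A" "dim_col A" _ _ "dim_col C"])
     (use assms in \<open>auto intro!: carrier_matI\<close>)

lemma mult_minus_distrib_dim:
  fixes A B C :: "'a :: ring mat"
  assumes "dim_col A = dim_row B" "dim_row B = dim_row C" "dim_col B = dim_col C"
  shows "A * (B - C) = A * B - A * C"
  by (rule mult_minus_distrib_mat[of _ "dim_row A" "dim_col A" _ "dim_col B"])
     (use assms in \<open>auto intro!: carrier_matI\<close>)

lemma minus_mult_distrib_dim:
  fixes A B C :: "'a :: ring mat"
  assumes "dim_col A = dim_row C" "dim_row A = dim_row B" "dim_col A = dim_col B"
  shows "(A - B) * C = A * C - B * C"
  by (rule minus_mult_distrib_mat[of _ "dim_row A" "dim_col A" _ _ "dim_col C"])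
     (use assms in \<open>auto intro!: carrier_matI\<close>)

lemma assoc_add_dim:
  fixes A B C :: "'a :: monoid_add mat"
  assumes "dim_row A = dim_row B" "dim_col A = dim_col B" "dim_row B = dim_row C" "dim_col B = dim_col C"
  shows "A + B + C = A + (B + C)"
  by (rule assoc_add_mat[of _ "dim_row A" "dim_col A"]) (use assms in \<open>auto intro!: carrier_matI\<close>)

lemma transpose_mult_dim:
  fixes A B :: "'a :: comm_semiring_0 mat"
  assumes "dim_col A = dim_row B"
  shows "transpose_mat (A * B) = transpose_mat B * transpose_mat A"
  by (rule transpose_mult[of _ "dim_row A" "dim_col A" _ "dim_col B"])
     (use assms in \<open>auto intro!: carrier_matI\<close>)

lemma add_zero_smult_mat:
  "A \<in> carrier_mat n m \<Longrightarrow> B \<in> carrier_mat n m \<Longrightarrow> A + (0::real) \<cdot>\<^sub>m B = A"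
  by (auto intro!: eq_matI)

text \<open>Unlike \<open>minv\<close>, this inverse has the right dimensions for every square matrix, and
  its entries are rational functions of the entries of the argument.\<close>

definition mat_inv :: "real mat \<Rightarrow> real mat" where
  "mat_inv A = (1 / det A) \<cdot>\<^sub>m adj_mat A"

lemma mat_inv_dim[simp]: "dim_row (mat_inv A) = dim_row A" "dim_col (mat_inv A) = dim_col A"
  unfolding mat_inv_def adj_mat_def by auto

lemma mat_inv_carrier[simp]: "A \<in> carrier_mat n n \<Longrightarrow> mat_inv A \<in> carrier_mat n n"
  unfolding mat_inv_def by (metis adj_mat(1) smult_carrier_mat)

lemma mat_inv_right:
  assumes A: "A \<in> carrier_mat n n" and d: "det A \<noteq> 0"
  shows "A * mat_inv A = 1\<^sub>m n"
proof -
  have "A * mat_inv A = (1 / det A) \<cdot>\<^sub>m (A * adj_mat A)"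
    unfolding mat_inv_def using A adj_mat(1)[OF A] by (simp add: mult_smult_distrib)
  also have "\<dots> = 1\<^sub>m n" using adj_mat(2)[OF A] d by (auto simp: eq_matI)
  finally show ?thesis .
qed

lemma mat_inv_left:
  assumes A: "A \<in> carrier_mat n n" and d: "det A \<noteq> 0"
  shows "mat_inv A * A = 1\<^sub>m n"
proof -
  have "mat_inv A * A = (1 / det A) \<cdot>\<^sub>m (adj_mat A * A)"
    unfolding mat_inv_def using A adj_mat(1)[OF A] by (simp add: mult_smult_assoc_mat)
  also have "\<dots> = 1\<^sub>m n" using adj_mat(3)[OF A] d by (auto simp: eq_matI)
  finally show ?thesis .
qed

lemma mat_inv_cancel_left:
  assumes "A \<in> carrier_mat n n" "det A \<noteq> 0" "dim_row Z = n"
  shows "A * (mat_inv A * Z) = Z"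
proof -
  have "A * (mat_inv A * Z) = (A * mat_inv A) * Z" using assms by (simp add: assoc_mult_mat_dim carrier_matD)
  thus ?thesis using mat_inv_right[OF assms(1,2)] assms(3) by simp
qed

lemma mat_inv_cancel_left':
  assumes "A \<in> carrier_mat n n" "det A \<noteq> 0" "dim_row Z = n"
  shows "mat_inv A * (A * Z) = Z"
proof -
  have "mat_inv A * (A * Z) = (mat_inv A * A) * Z" using assms by (simp add: assoc_mult_mat_dim carrier_matD)
  thus ?thesis using mat_inv_left[OF assms(1,2)] assms(3) by simp
qed

lemma mat_inv_unique_left:
  assumes A: "A \<in> carrier_mat n n" and d: "det A \<noteq> 0" and X: "X \<in> carrier_mat n n"
    and XA: "X * A = 1\<^sub>m n"
  shows "X = mat_inv A"
proof -
  have "X = X * (A * mat_inv A)" using mat_inv_right[OF A d] X by simp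
  also have "\<dots> = (X * A) * mat_inv A" using X A by (simp add: assoc_mult_mat_dim carrier_matD)
  finally show ?thesis using XA A by simp
qed

lemma mat_inv_unique_right:
  assumes A: "A \<in> carrier_mat n n" and d: "det A \<noteq> 0" and X: "X \<in> carrier_mat n n"
    and AX: "A * X = 1\<^sub>m n"
  shows "X = mat_inv A"
  by (rule mat_inv_unique_left[OF A d X mat_mult_left_right_inverse[OF A X AX]])

lemma minv_eq_mat_inv:
  assumes K: "K \<in> carrier_mat n n" and d: "det K \<noteq> 0"
  shows "minv K = mat_inv K"
proof -
  have "K \<in> Units (ring_mat TYPE(real) n undefined)" by (rule det_non_zero_imp_unit[OF K d])
  then obtain B where B: "mat_inverse K = Some B"
    using mat_inverse(1)[OF K, of undefined] by (cases "mat_inverse K") auto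
  have "K * B = 1\<^sub>m n" "B \<in> carrier_mat n n" using mat_inverse(2)[OF K B] by auto
  thus ?thesis unfolding minv_def B using mat_inv_unique_right[OF K d] by simp
qed

lemma det_mat_inv:
  assumes K: "K \<in> carrier_mat n n" and d: "det K \<noteq> 0"
  shows "det (mat_inv K) = 1 / det K"
proof -
  have "det K * det (mat_inv K) = det (K * mat_inv K)" using K by (simp add: det_mult[of K n])
  also have "\<dots> = 1" using mat_inv_right[OF K d] by simp
  finally show ?thesis using d by (simp add: field_simps)
qed

lemma transpose_mat_inv:
  assumes P: "P \<in> carrier_mat n n" and d: "det P \<noteq> 0" and sym: "transpose_mat P = P"
  shows "transpose_mat (mat_inv P) = mat_inv P"
proof (rule mat_inv_unique_left[OF P d])
  show "transpose_mat (mat_inv P) \<in> carrier_mat n n" using P by simp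
  have "transpose_mat (mat_inv P) * P = transpose_mat (P * mat_inv P)"
    using P sym by (metis transpose_mult mat_inv_carrier)
  also have "\<dots> = 1\<^sub>m n" using mat_inv_right[OF P d] by simp
  finally show "transpose_mat (mat_inv P) * P = 1\<^sub>m n" .
qed

lemma mat_inv_diff:
  assumes A: "A \<in> carrier_mat n n" and P: "P \<in> carrier_mat n n"
    and dA: "det A \<noteq> 0" and dP: "det P \<noteq> 0"
  shows "mat_inv P - mat_inv A = mat_inv P * ((A - P) * mat_inv A)"
proof -
  have iA: "mat_inv A \<in> carrier_mat n n" and iP: "mat_inv P \<in> carrier_mat n n" using A P by auto
  have "mat_inv P * ((A - P) * mat_inv A) = mat_inv P * (A * mat_inv A) - mat_inv P * (P * mat_inv A)"
    using A P iA iP by (simp add: minus_mult_distrib_mat[OF A P iA] mult_minus_distrib_dim carrier_matD)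
  also have "\<dots> = mat_inv P - mat_inv A"
    using A right_mult_one_mat[OF iP] mat_inv_right[OF A dA] mat_inv_cancel_left'[OF P dP, of "mat_inv A"] by simp
  finally show ?thesis ..
qed

lemma mtrace_mult_sum:
  assumes "A \<in> carrier_mat n m" "B \<in> carrier_mat m n"
  shows "mtrace (A * B) = (\<Sum>i<n. \<Sum>k<m. A $$ (i,k) * B $$ (k,i))"
  unfolding mtrace_def using assms
  by (auto simp: scalar_prod_def row_def col_def atLeast0LessThan intro!: sum.cong)

lemma mtrace_mult_comm:
  assumes "A \<in> carrier_mat n m" "B \<in> carrier_mat m n"
  shows "mtrace (A * B) = mtrace (B * A)"
  unfolding mtrace_mult_sum[OF assms] mtrace_mult_sum[OF assms(2,1)]
  by (subst sum.swap) (simp add: mult.commute)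

lemma mtrace_mult_comm_dim:
  fixes A B :: "real mat"
  assumes "dim_col A = dim_row B" "dim_col B = dim_row A"
  shows "mtrace (A * B) = mtrace (B * A)"
  by (rule mtrace_mult_comm[of _ "dim_row A" "dim_col A"]) (use assms in \<open>auto intro!: carrier_matI\<close>)

lemma mtrace_smult: "A \<in> carrier_mat n n \<Longrightarrow> mtrace (c \<cdot>\<^sub>m A) = c * mtrace A"
  unfolding mtrace_def by (auto simp: sum_distrib_left intro!: sum.cong)

lemma mtrace_add:
  assumes "A \<in> carrier_mat n n" "B \<in> carrier_mat n n"
  shows "mtrace (A + B) = mtrace A + mtrace B"
  unfolding mtrace_def using assms by (auto simp: sum.distrib intro!: sum.cong)

lemma mtrace_minus:
  assumes "A \<in> carrier_mat n n" "B \<in> carrier_mat n n"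
  shows "mtrace (A - B) = mtrace A - mtrace B"
  unfolding mtrace_def using assms by (auto simp: sum_subtractf intro!: sum.cong)

lemma mtrace_add_dim:
  fixes A B :: "real mat"
  assumes "dim_row A = dim_col A" "dim_row B = dim_row A" "dim_col B = dim_col A"
  shows "mtrace (A + B) = mtrace A + mtrace B"
  by (rule mtrace_add[of _ "dim_row A"]) (use assms in \<open>auto intro!: carrier_matI\<close>)

lemma mtrace_minus_dim:
  fixes A B :: "real mat"
  assumes "dim_row A = dim_col A" "dim_row B = dim_row A" "dim_col B = dim_col A"
  shows "mtrace (A - B) = mtrace A - mtrace B"
  by (rule mtrace_minus[of _ "dim_row A"]) (use assms in \<open>auto intro!: carrier_matI\<close>)

lemma mtrace_sum_smult_mult:
  fixes W :: "real mat" and B :: "nat \<Rightarrow> real mat"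
  assumes W: "W \<in> carrier_mat n n" and B: "\<And>i. i < d \<Longrightarrow> B i \<in> carrier_mat n n"
  shows "(\<Sum>i<d. v i * mtrace (B i * W)) = mtrace (mat n n (\<lambda>(a,b). \<Sum>i<d. v i * B i $$ (a,b)) * W)"
proof -
  have "(\<Sum>i<d. v i * mtrace (B i * W)) = (\<Sum>i<d. \<Sum>a<n. \<Sum>c<n. v i * B i $$ (a,c) * W $$ (c,a))"
    using B W by (auto simp: mtrace_mult_sum[of _ n n] sum_distrib_left mult.assoc intro!: sum.cong)
  also have "\<dots> = (\<Sum>a<n. \<Sum>c<n. \<Sum>i<d. v i * B i $$ (a,c) * W $$ (c,a))"
    by (subst sum.swap) (simp add: sum.swap[of _ "{..<d}"])
  also have "\<dots> = mtrace (mat n n (\<lambda>(a,b). \<Sum>i<d. v i * B i $$ (a,b)) * W)"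
    using W by (subst mtrace_mult_sum[of _ n n]) (auto simp: sum_distrib_right intro!: sum.cong)
  finally show ?thesis .
qed

lemma mtrace_bilinear_sum:
  fixes Y :: "real mat" and B :: "nat \<Rightarrow> real mat" and v :: "nat \<Rightarrow> real"
  assumes Y: "Y \<in> carrier_mat n n" and B: "\<And>i. i < d \<Longrightarrow> B i \<in> carrier_mat n n"
  defines "Bv \<equiv> mat n n (\<lambda>(a,b). \<Sum>i<d. v i * B i $$ (a,b))"
  shows "(\<Sum>i<d. \<Sum>j<d. v i * v j * mtrace (Y * B j * Y * B i)) = mtrace (Y * Bv * Y * Bv)"
proof -
  have Bv: "Bv \<in> carrier_mat n n" unfolding Bv_def by auto
  have rot: "mtrace (Y * X * Y * B i) = mtrace (B i * (Y * X * Y))"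
    if "X \<in> carrier_mat n n" "B i \<in> carrier_mat n n" for X i
    by (rule mtrace_mult_comm[of _ n n]) (use Y that in auto)
  have "(\<Sum>i<d. \<Sum>j<d. v i * v j * mtrace (Y * B j * Y * B i)) =
        (\<Sum>j<d. v j * (\<Sum>i<d. v i * mtrace (B i * (Y * B j * Y))))"
    using B rot by (subst sum.swap) (auto simp: sum_distrib_left algebra_simps intro!: sum.cong)
  also have "\<dots> = (\<Sum>j<d. v j * mtrace (Bv * (Y * B j * Y)))"
    unfolding Bv_def using Y B by (intro sum.cong refl arg_cong[where f = "\<lambda>x. _ * x"] mtrace_sum_smult_mult) auto
  also have "\<dots> = (\<Sum>j<d. v j * mtrace (B j * (Y * Bv * Y)))"
  proof (intro sum.cong refl arg_cong[where f = "\<lambda>x. _ * x"])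
    fix j assume "j \<in> {..<d}"
    hence Bj: "B j \<in> carrier_mat n n" using B by auto
    have "mtrace (Bv * (Y * B j * Y)) = mtrace (Y * Bv * Y * B j)"
      using Y Bv Bj mtrace_mult_comm_dim[of "Bv * Y * B j" Y] by (simp add: assoc_mult_mat_dim)
    thus "mtrace (Bv * (Y * B j * Y)) = mtrace (B j * (Y * Bv * Y))" using rot[OF Bv Bj] by simp
  qed
  also have "\<dots> = mtrace (Bv * (Y * Bv * Y))"
    unfolding Bv_def by (intro mtrace_sum_smult_mult) (use Y B in auto)
  also have "\<dots> = mtrace (Y * Bv * Y * Bv)" by (rule mtrace_mult_comm[of _ n n]) (use Y Bv in auto)
  finally show ?thesis .
qed

lemma index_mult3_mat:
  fixes X E Y :: "real mat"
  assumes X: "X \<in> carrier_mat r p" and E: "E \<in> carrier_mat p p" and Y: "Y \<in> carrier_mat p s"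
    and a: "a < r" and b: "b < s"
  shows "(X * E * Y) $$ (a,b) = (\<Sum>c<p. \<Sum>e<p. X $$ (a,c) * E $$ (c,e) * Y $$ (e,b))"
proof -
  have XE: "X * E \<in> carrier_mat r p" using X E by simp
  have "(X * E * Y) $$ (a,b) = row (X * E) a \<bullet> col Y b" using XE Y a b by (intro index_mult_mat(1)) auto
  also have "\<dots> = (\<Sum>e<p. (X * E) $$ (a,e) * Y $$ (e,b))"
    using XE Y a b carrier_matD[OF XE] by (auto simp: scalar_prod_def atLeast0LessThan intro!: sum.cong)
  also have "\<dots> = (\<Sum>e<p. (\<Sum>c<p. X $$ (a,c) * E $$ (c,e)) * Y $$ (e,b))"
    using X E a by (auto simp: scalar_prod_def row_def col_def atLeast0LessThan intro!: sum.cong)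
  also have "\<dots> = (\<Sum>c<p. \<Sum>e<p. X $$ (a,c) * E $$ (c,e) * Y $$ (e,b))"
    by (simp add: sum_distrib_right) (rule sum.swap)
  finally show ?thesis .
qed

lemma mat_lincomb_sandwich:
  fixes X Y V :: "real mat" and E :: "nat \<Rightarrow> real mat"
  assumes X: "X \<in> carrier_mat r p" and Y: "Y \<in> carrier_mat p s" and V: "V \<in> carrier_mat p p"
    and E: "\<And>i. i < d \<Longrightarrow> E i \<in> carrier_mat p p"
    and VE: "\<And>a b. a < p \<Longrightarrow> b < p \<Longrightarrow> V $$ (a,b) = (\<Sum>i<d. w i * E i $$ (a,b))"
  shows "mat r s (\<lambda>(a,b). \<Sum>i<d. w i * (X * E i * Y) $$ (a,b)) = X * V * Y"
proof (rule eq_matI)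
  fix a b assume "a < dim_row (X * V * Y)" "b < dim_col (X * V * Y)"
  hence ab: "a < r" "b < s" using X Y by auto
  have "(\<Sum>i<d. w i * (X * E i * Y) $$ (a,b)) = (\<Sum>i<d. \<Sum>c<p. \<Sum>e<p. w i * (X $$ (a,c) * E i $$ (c,e) * Y $$ (e,b)))"
    using index_mult3_mat[OF X E Y ab] by (auto simp: sum_distrib_left intro!: sum.cong)
  also have "\<dots> = (\<Sum>c<p. \<Sum>e<p. \<Sum>i<d. w i * (X $$ (a,c) * E i $$ (c,e) * Y $$ (e,b)))"
    by (subst sum.swap) (simp add: sum.swap[of _ "{..<d}"])
  also have "\<dots> = (\<Sum>c<p. \<Sum>e<p. X $$ (a,c) * V $$ (c,e) * Y $$ (e,b))"
    using VE by (auto simp: sum_distrib_left sum_distrib_right algebra_simps intro!: sum.cong)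
  also have "\<dots> = (X * V * Y) $$ (a,b)" using index_mult3_mat[OF X V Y ab] by simp
  finally show "mat r s (\<lambda>(a,b). \<Sum>i<d. w i * (X * E i * Y) $$ (a,b)) $$ (a,b) = (X * V * Y) $$ (a,b)"
    using ab by simp
qed (use X Y in auto)

section \<open>Derivatives of log-determinants along lines\<close>

lemma det_line_sum:
  assumes A: "A \<in> carrier_mat n n" and B: "B \<in> carrier_mat n n"
  shows "det (A + r \<cdot>\<^sub>m B) = (\<Sum>p | p permutes {0..<n}. signof p *
            (\<Prod>i=0..<n. A $$ (i, p i) + r * B $$ (i, p i)))"
proof -
  have C: "A + r \<cdot>\<^sub>m B \<in> carrier_mat n n" using A B by auto
  show ?thesis unfolding det_def'[OF C]
  proof (rule sum.cong[OF refl], rule arg_cong[where f = "\<lambda>x. _ * x"], rule prod.cong[OF refl])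
    fix p i assume "p \<in> {p. p permutes {0..<n}}" "i \<in> {0..<n}"
    hence "p i < n" "i < n" using permutes_in_image by fastforce+
    thus "(A + r \<cdot>\<^sub>m B) $$ (i, p i) = A $$ (i, p i) + r * B $$ (i, p i)" using A B by auto
  qed
qed

lemma continuous_on_det_line:
  fixes A B :: "real mat"
  assumes "A \<in> carrier_mat n n" "B \<in> carrier_mat n n"
  shows "continuous_on UNIV (\<lambda>r. det (A + r \<cdot>\<^sub>m B))"
  unfolding det_line_sum[OF assms] by (intro continuous_intros)

lemma isCont_det_line:
  fixes A B :: "real mat"
  assumes "A \<in> carrier_mat n n" "B \<in> carrier_mat n n"
  shows "isCont (\<lambda>r. det (A + r \<cdot>\<^sub>m B)) r"
  using continuous_on_det_line[OF assms] by (simp add: continuous_on_eq_continuous_at)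

text \<open>The left-hand side is \<open>\<Sum>i. det A\<^sub>i\<close>, where \<open>A\<^sub>i\<close> is \<open>A\<close> with its \<open>i\<close>-th row replaced by
  that of \<open>B\<close>; expanding \<open>det A\<^sub>i\<close> along that row gives the cofactors of \<open>A\<close>.\<close>

lemma sum_permutes_row_replaced:
  fixes A B :: "real mat"
  assumes A: "A \<in> carrier_mat n n" and B: "B \<in> carrier_mat n n"
  shows "(\<Sum>p | p permutes {0..<n}. signof p * (\<Sum>i\<in>{0..<n}. B $$ (i, p i) *
            (\<Prod>j\<in>{0..<n} - {i}. A $$ (j, p j)))) = mtrace (adj_mat A * B)"
proof -
  let ?P = "{p. p permutes {0..<n}}"
  define Ai where "Ai i = mat n n (\<lambda>(j,l). if j = i then B $$ (i,l) else A $$ (j,l))" for i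
  have AiC: "Ai i \<in> carrier_mat n n" for i unfolding Ai_def by auto
  have det_Ai: "det (Ai i) = (\<Sum>p\<in>?P. signof p * (B $$ (i, p i) *
         (\<Prod>j\<in>{0..<n} - {i}. A $$ (j, p j))))" if i: "i < n" for i
    unfolding det_def'[OF AiC]
  proof (rule sum.cong[OF refl])
    fix p assume "p \<in> ?P"
    hence p: "j < n \<Longrightarrow> p j < n" for j using permutes_in_image by fastforce
    have "(\<Prod>j = 0..<n. Ai i $$ (j, p j)) = Ai i $$ (i, p i) * (\<Prod>j\<in>{0..<n} - {i}. Ai i $$ (j, p j))"
      by (rule prod.remove) (use i in auto)
    also have "\<dots> = B $$ (i, p i) * (\<Prod>j\<in>{0..<n} - {i}. A $$ (j, p j))"
      using i p unfolding Ai_def by (auto intro!: prod.cong)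
    finally show "signof p * (\<Prod>j = 0..<n. Ai i $$ (j, p j)) = signof p * (B $$ (i, p i) *
         (\<Prod>j\<in>{0..<n} - {i}. A $$ (j, p j)))" by simp
  qed
  have laplace_Ai: "det (Ai i) = (\<Sum>l<n. B $$ (i,l) * cofactor A i l)" if i: "i < n" for i
  proof -
    have "mat_delete (Ai i) i l = mat_delete A i l" for l
      unfolding mat_delete_def Ai_def using A i by (auto intro!: eq_matI)
    thus ?thesis unfolding laplace_expansion_row[OF AiC i] cofactor_def
      using i unfolding Ai_def by (auto intro!: sum.cong)
  qed
  have "(\<Sum>p\<in>?P. signof p * (\<Sum>i\<in>{0..<n}. B $$ (i, p i) * (\<Prod>j\<in>{0..<n} - {i}. A $$ (j, p j)))) =
        (\<Sum>i\<in>{0..<n}. \<Sum>p\<in>?P. signof p * (B $$ (i, p i) * (\<Prod>j\<in>{0..<n} - {i}. A $$ (j, p j))))"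
    by (subst sum.swap) (simp add: sum_distrib_left)
  also have "\<dots> = (\<Sum>i<n. \<Sum>l<n. B $$ (i,l) * cofactor A i l)"
    using det_Ai laplace_Ai by (auto simp: atLeast0LessThan intro!: sum.cong)
  also have "\<dots> = mtrace (adj_mat A * B)"
    unfolding mtrace_mult_sum[OF adj_mat(1)[OF A] B] using A
    by (subst sum.swap) (auto simp: adj_mat_def mult.commute intro!: sum.cong)
  finally show ?thesis .
qed

lemma has_real_derivative_det_line:
  fixes A B :: "real mat"
  assumes A: "A \<in> carrier_mat n n" and B: "B \<in> carrier_mat n n"
  shows "((\<lambda>r. det (A + r \<cdot>\<^sub>m B)) has_real_derivative mtrace (adj_mat A * B)) (at 0)"
proof -
  have "((\<lambda>r. \<Sum>p | p permutes {0..<n}. signof p * (\<Prod>i=0..<n. A $$ (i, p i) + r * B $$ (i, p i)))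
     has_real_derivative (\<Sum>p | p permutes {0..<n}. signof p * (\<Sum>i\<in>{0..<n}. B $$ (i, p i) *
         (\<Prod>j\<in>{0..<n} - {i}. A $$ (j, p j))))) (at 0)"
  proof (intro DERIV_sum DERIV_cmult)
    fix p
    have "((\<lambda>r. \<Prod>i=0..<n. A $$ (i, p i) + r * B $$ (i, p i)) has_real_derivative
       (\<Sum>i\<in>{0..<n}. B $$ (i, p i) * (\<Prod>j\<in>{0..<n} - {i}. A $$ (j, p j) + 0 * B $$ (j, p j)))) (at 0)"
      by (rule has_field_derivative_prod) (auto intro!: derivative_eq_intros)
    thus "((\<lambda>r. \<Prod>i=0..<n. A $$ (i, p i) + r * B $$ (i, p i)) has_real_derivative
       (\<Sum>i\<in>{0..<n}. B $$ (i, p i) * (\<Prod>j\<in>{0..<n} - {i}. A $$ (j, p j)))) (at 0)" by simp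
  qed
  thus ?thesis unfolding det_line_sum[OF A B] sum_permutes_row_replaced[OF A B] .
qed

lemma has_real_derivative_ln_det_line:
  fixes A B :: "real mat"
  assumes A: "A \<in> carrier_mat n n" and B: "B \<in> carrier_mat n n" and d: "det A > 0"
  shows "((\<lambda>r. ln (det (A + r \<cdot>\<^sub>m B))) has_real_derivative mtrace (mat_inv A * B)) (at 0)"
proof -
  have "DERIV ln (det (A + 0 \<cdot>\<^sub>m B)) :> inverse (det A)"
    using DERIV_ln[of "det A"] d add_zero_smult_mat[OF A B] by simp
  from DERIV_chain2[OF this has_real_derivative_det_line[OF A B]]
  have "((\<lambda>r. ln (det (A + r \<cdot>\<^sub>m B))) has_real_derivative inverse (det A) * mtrace (adj_mat A * B)) (at 0)" .
  moreover have "inverse (det A) * mtrace (adj_mat A * B) = mtrace (mat_inv A * B)"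
    unfolding mat_inv_def using A B adj_mat(1)[OF A]
    by (simp add: mult_smult_assoc_mat mtrace_smult[of _ n] divide_inverse)
  ultimately show ?thesis by simp
qed

lemma isCont_mat_inv_line_index:
  fixes A B :: "real mat"
  assumes A: "A \<in> carrier_mat n n" and B: "B \<in> carrier_mat n n" and d: "det A \<noteq> 0"
    and i: "i < n" and j: "j < n"
  shows "isCont (\<lambda>r. mat_inv (A + r \<cdot>\<^sub>m B) $$ (i,j)) 0"
proof -
  have delete: "mat_delete (A + r \<cdot>\<^sub>m B) j i = mat_delete A j i + r \<cdot>\<^sub>m mat_delete B j i" for r
    unfolding mat_delete_def using A B by (auto intro!: eq_matI)
  have eq: "mat_inv (A + r \<cdot>\<^sub>m B) $$ (i,j) =
      (-1)^(j+i) * det (mat_delete A j i + r \<cdot>\<^sub>m mat_delete B j i) / det (A + r \<cdot>\<^sub>m B)" for r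
    unfolding mat_inv_def adj_mat_def cofactor_def delete[symmetric] using A B i j by auto
  have "isCont (\<lambda>r. det (mat_delete A j i + r \<cdot>\<^sub>m mat_delete B j i)) 0"
    by (rule isCont_det_line) (use A B mat_delete_carrier in auto)
  thus ?thesis unfolding eq
    using isCont_det_line[OF A B] d add_zero_smult_mat[OF A B] by (intro continuous_intros) auto
qed

lemma mtrace_mat_inv_line_diff:
  fixes A B C :: "real mat"
  assumes A: "A \<in> carrier_mat n n" and B: "B \<in> carrier_mat n n" and C: "C \<in> carrier_mat n n"
    and dA: "det A \<noteq> 0" and dP: "det (A + r \<cdot>\<^sub>m B) \<noteq> 0"
  shows "mtrace (mat_inv (A + r \<cdot>\<^sub>m B) * C) - mtrace (mat_inv A * C) =
    - r * mtrace (mat_inv (A + r \<cdot>\<^sub>m B) * (B * (mat_inv A * C)))"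
proof -
  let ?P = "A + r \<cdot>\<^sub>m B"
  have P: "?P \<in> carrier_mat n n" using A B by auto
  have iP: "mat_inv ?P \<in> carrier_mat n n" and iA: "mat_inv A \<in> carrier_mat n n" using P A by simp_all
  have "A - ?P = (-r) \<cdot>\<^sub>m B" using A B by (auto intro!: eq_matI)
  hence diff: "mat_inv ?P - mat_inv A = mat_inv ?P * (((-r) \<cdot>\<^sub>m B) * mat_inv A)"
    using mat_inv_diff[OF A P dA dP] by simp
  have "mtrace (mat_inv ?P * C) - mtrace (mat_inv A * C) = mtrace ((mat_inv ?P - mat_inv A) * C)"
    using iP iA C by (simp add: minus_mult_distrib_mat[OF iP iA C] mtrace_minus[of _ n])
  also have "\<dots> = mtrace ((-r) \<cdot>\<^sub>m (mat_inv ?P * (B * (mat_inv A * C))))"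
    unfolding diff using A B C
    by (simp add: assoc_mult_mat_dim mult_smult_distrib_dim mult_smult_assoc_dim carrier_matD)
  also have "\<dots> = - r * mtrace (mat_inv ?P * (B * (mat_inv A * C)))"
    by (rule mtrace_smult[of _ n]) (use iP A B C in auto)
  finally show ?thesis .
qed

lemma has_real_derivative_mtrace_mat_inv_line:
  fixes A B C :: "real mat"
  assumes A: "A \<in> carrier_mat n n" and B: "B \<in> carrier_mat n n" and d: "det A \<noteq> 0"
    and C: "C \<in> carrier_mat n n"
  shows "((\<lambda>r. mtrace (mat_inv (A + r \<cdot>\<^sub>m B) * C)) has_real_derivative
           - mtrace (mat_inv A * B * mat_inv A * C)) (at 0)"
proof -
  have A0: "A + 0 \<cdot>\<^sub>m B = A" using add_zero_smult_mat[OF A B] .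
  let ?X = "B * (mat_inv A * C)"
  have X: "?X \<in> carrier_mat n n" using B A C by auto
  have "mtrace (mat_inv (A + r \<cdot>\<^sub>m B) * ?X) =
      (\<Sum>i<n. \<Sum>k<n. mat_inv (A + r \<cdot>\<^sub>m B) $$ (i,k) * ?X $$ (k,i))" for r
    by (rule mtrace_mult_sum) (use A B X in auto)
  hence "isCont (\<lambda>r. mtrace (mat_inv (A + r \<cdot>\<^sub>m B) * ?X)) 0"
    by (simp only:) (intro continuous_intros isCont_mat_inv_line_index[OF A B d], auto)
  hence lim: "((\<lambda>r. - mtrace (mat_inv (A + r \<cdot>\<^sub>m B) * ?X)) \<longlongrightarrow> - mtrace (mat_inv A * ?X)) (at 0)"
    using A0 unfolding isCont_def by (auto intro!: tendsto_intros)
  have "\<forall>\<^sub>F r in at 0. det (A + r \<cdot>\<^sub>m B) \<noteq> 0"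
    using isCont_det_line[OF A B, of 0] d A0 unfolding isCont_def
    by (auto dest: tendsto_imp_eventually_ne)
  hence "\<forall>\<^sub>F r in at 0. - mtrace (mat_inv (A + r \<cdot>\<^sub>m B) * ?X) =
     (mtrace (mat_inv (A + r \<cdot>\<^sub>m B) * C) - mtrace (mat_inv (A + 0 \<cdot>\<^sub>m B) * C)) / (r - 0)"
    using eventually_neq_at_within[of 0 0 UNIV]
    by eventually_elim (simp add: mtrace_mat_inv_line_diff[OF A B C d] A0)
  with lim have "((\<lambda>r. mtrace (mat_inv (A + r \<cdot>\<^sub>m B) * C)) has_real_derivative
      - mtrace (mat_inv A * ?X)) (at 0)"
    unfolding has_field_derivative_iff by (rule Lim_transform_eventually)
  moreover have "mat_inv A * B * mat_inv A * C = mat_inv A * ?X"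
    using A B C by (simp add: assoc_mult_mat_dim carrier_matD)
  ultimately show ?thesis by simp
qed

locale ln_det_sum =
  fixes S :: "nat set" and dim :: "nat \<Rightarrow> nat"
    and M :: "nat \<Rightarrow> (nat \<Rightarrow> real) \<Rightarrow> real mat" and D :: "nat \<Rightarrow> nat \<Rightarrow> real mat"
    and c0 :: real and c :: "nat \<Rightarrow> real" and g :: "(nat \<Rightarrow> real) \<Rightarrow> real"
  assumes finite_S: "finite S"
    and M_carrier: "\<And>k z. k \<in> S \<Longrightarrow> M k z \<in> carrier_mat (dim k) (dim k)"
    and D_carrier: "\<And>k i. k \<in> S \<Longrightarrow> D k i \<in> carrier_mat (dim k) (dim k)"
    and M_affine: "\<And>k z i s. k \<in> S \<Longrightarrow> M k (z(i := z i + s)) = M k z + s \<cdot>\<^sub>m D k i"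
    and g_eq: "\<And>z. \<forall>k\<in>S. det (M k z) > 0 \<Longrightarrow> g z = c0 + (\<Sum>k\<in>S. c k * ln (det (M k z)))"
begin

lemma eventually_det_pos:
  assumes pos: "\<forall>k\<in>S. det (M k z) > 0"
  shows "\<forall>\<^sub>F s in nhds 0. \<forall>k\<in>S. det (M k (z(i := z i + s))) > 0"
proof (rule eventually_ball_finite[OF finite_S], intro ballI)
  fix k assume k: "k \<in> S"
  have "((\<lambda>s. det (M k z + s \<cdot>\<^sub>m D k i)) \<longlongrightarrow> det (M k z)) (at 0)"
    using isCont_det_line[OF M_carrier[OF k] D_carrier[OF k], of 0]
      add_zero_smult_mat[OF M_carrier[OF k] D_carrier[OF k]] unfolding isCont_def by simp
  hence "\<forall>\<^sub>F s in at 0. det (M k z + s \<cdot>\<^sub>m D k i) > 0"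
    using pos k order_tendstoD(1) by blast
  thus "\<forall>\<^sub>F s in nhds 0. det (M k (z(i := z i + s))) > 0"
    using pos k add_zero_smult_mat[OF M_carrier[OF k] D_carrier[OF k]]
    unfolding eventually_nhds_conv_at by (auto simp: M_affine[OF k])
qed

lemma partial_eq:
  assumes pos: "\<forall>k\<in>S. det (M k z) > 0"
  shows "partial g i z = (\<Sum>k\<in>S. c k * mtrace (mat_inv (M k z) * D k i))"
proof -
  have "\<forall>\<^sub>F s in nhds 0. g (z(i := z i + s)) = c0 + (\<Sum>k\<in>S. c k * ln (det (M k z + s \<cdot>\<^sub>m D k i)))"
    using eventually_det_pos[OF pos, of i]
  proof eventually_elim
    case (elim s)
    show ?case by (simp add: g_eq[OF elim] M_affine cong: sum.cong)
  qed
  moreover have "((\<lambda>s. c0 + (\<Sum>k\<in>S. c k * ln (det (M k z + s \<cdot>\<^sub>m D k i)))) has_real_derivative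
      0 + (\<Sum>k\<in>S. c k * mtrace (mat_inv (M k z) * D k i))) (at 0)"
    using M_carrier D_carrier pos
    by (intro DERIV_add DERIV_const DERIV_sum DERIV_cmult has_real_derivative_ln_det_line) auto
  ultimately have "((\<lambda>s. g (z(i := z i + s))) has_real_derivative
      (\<Sum>k\<in>S. c k * mtrace (mat_inv (M k z) * D k i))) (at 0)"
    using DERIV_cong_ev[OF refl _ refl] by fastforce
  thus ?thesis unfolding partial_def by (rule DERIV_imp_deriv)
qed

lemma second_partial_eq:
  assumes pos: "\<forall>k\<in>S. det (M k x) > 0"
  shows "partial (\<lambda>z. partial g i z) j x =
     - (\<Sum>k\<in>S. c k * mtrace (mat_inv (M k x) * D k j * mat_inv (M k x) * D k i))"
proof -
  have "\<forall>\<^sub>F r in nhds 0. partial g i (x(j := x j + r)) =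
       (\<Sum>k\<in>S. c k * mtrace (mat_inv (M k x + r \<cdot>\<^sub>m D k j) * D k i))"
    using eventually_det_pos[OF pos, of j]
  proof eventually_elim
    case (elim r)
    show ?case by (simp add: partial_eq[OF elim] M_affine cong: sum.cong)
  qed
  moreover have "((\<lambda>r. (\<Sum>k\<in>S. c k * mtrace (mat_inv (M k x + r \<cdot>\<^sub>m D k j) * D k i))) has_real_derivative
      (\<Sum>k\<in>S. c k * (- mtrace (mat_inv (M k x) * D k j * mat_inv (M k x) * D k i)))) (at 0)"
    using M_carrier D_carrier pos
    by (intro DERIV_sum DERIV_cmult has_real_derivative_mtrace_mat_inv_line) auto
  ultimately have "((\<lambda>r. partial g i (x(j := x j + r))) has_real_derivative
      (\<Sum>k\<in>S. c k * (- mtrace (mat_inv (M k x) * D k j * mat_inv (M k x) * D k i)))) (at 0)"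
    using DERIV_cong_ev[OF refl _ refl] by fastforce
  hence "partial (\<lambda>z. partial g i z) j x =
      (\<Sum>k\<in>S. c k * (- mtrace (mat_inv (M k x) * D k j * mat_inv (M k x) * D k i)))"
    unfolding partial_def[of "\<lambda>z. partial g i z"] by (rule DERIV_imp_deriv)
  thus ?thesis by (simp add: sum_negf)
qed

text \<open>The matrices \<open>mat (dim k) (dim k) \<dots>\<close> below are the derivatives of \<open>M k\<close> along \<open>v\<close>.\<close>

lemma hessian_quadratic_form:
  assumes pos: "\<forall>k\<in>S. det (M k x) > 0" and v: "v \<in> carrier_vec d"
  shows "v \<bullet> (hessian g d x *\<^sub>v v) = - (\<Sum>k\<in>S. c k * mtrace (mat_inv (M k x) *
      mat (dim k) (dim k) (\<lambda>(a,b). \<Sum>i<d. v $ i * D k i $$ (a,b)) * mat_inv (M k x) *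
      mat (dim k) (dim k) (\<lambda>(a,b). \<Sum>i<d. v $ i * D k i $$ (a,b))))"
proof -
  let ?T = "\<lambda>k i j. mtrace (mat_inv (M k x) * D k j * mat_inv (M k x) * D k i)"
  have "v \<bullet> (hessian g d x *\<^sub>v v) = (\<Sum>i<d. v $ i * (\<Sum>j<d. hessian g d x $$ (i,j) * v $ j))"
    using v unfolding hessian_def by (auto simp: scalar_prod_def row_def atLeast0LessThan intro!: sum.cong)
  also have "\<dots> = (\<Sum>i<d. \<Sum>j<d. \<Sum>k\<in>S. - (c k * (v $ i * v $ j * ?T k i j)))"
    unfolding hessian_def using second_partial_eq[OF pos]
    by (auto simp: sum_distrib_left sum_distrib_right sum_negf algebra_simps intro!: sum.cong)
  also have "\<dots> = (\<Sum>k\<in>S. - (c k * (\<Sum>i<d. \<Sum>j<d. v $ i * v $ j * ?T k i j)))"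
    by (subst sum.swap, subst (2) sum.swap) (simp add: sum_negf sum_distrib_left)
  also have "\<dots> = - (\<Sum>k\<in>S. c k * mtrace (mat_inv (M k x) *
      mat (dim k) (dim k) (\<lambda>(a,b). \<Sum>i<d. v $ i * D k i $$ (a,b)) * mat_inv (M k x) *
      mat (dim k) (dim k) (\<lambda>(a,b). \<Sum>i<d. v $ i * D k i $$ (a,b))))"
    unfolding sum_negf[symmetric] using M_carrier D_carrier
    by (intro sum.cong refl arg_cong[where f = uminus] arg_cong[where f = "\<lambda>x. _ * x"]
        mtrace_bilinear_sum) auto
  finally show ?thesis .
qed

end

section \<open>Positive definite matrices\<close>

definition pos_semidef :: "nat \<Rightarrow> real mat \<Rightarrow> bool" where
  "pos_semidef n A \<longleftrightarrow> A \<in> carrier_mat n n \<and> transpose_mat A = A \<and>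
     (\<forall>v\<in>carrier_vec n. v \<bullet> (A *\<^sub>v v) \<ge> 0)"

lemma pos_def_carrier: "pos_def n P \<Longrightarrow> P \<in> carrier_mat n n"
  unfolding pos_def_def by auto

lemma pos_def_sym: "pos_def n P \<Longrightarrow> transpose_mat P = P"
  unfolding pos_def_def by auto

lemma pos_def_imp_pos_semidef:
  assumes P: "pos_def n P"
  shows "pos_semidef n P"
proof -
  have "w \<bullet> (P *\<^sub>v w) \<ge> 0" if "w \<in> carrier_vec n" for w
    using P that unfolding pos_def_def by (cases "w = 0\<^sub>v n") (auto intro: less_imp_le)
  thus ?thesis using P unfolding pos_def_def pos_semidef_def by auto
qed

lemma pos_def_one: "pos_def n (1\<^sub>m n)"
  unfolding pos_def_def
proof (intro conjI ballI impI)
  fix w :: "real vec" assume w: "w \<in> carrier_vec n" "w \<noteq> 0\<^sub>v n"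
  obtain a where a: "a < n" "w $ a \<noteq> 0" using w by (metis eq_vecI carrier_vecD index_zero_vec)
  have "w \<bullet> (1\<^sub>m n *\<^sub>v w) = (\<Sum>i<n. w $ i * w $ i)" using w by (simp add: scalar_prod_def atLeast0LessThan)
  also have "\<dots> > 0" by (intro sum_pos2[of _ a]) (use a in \<open>auto, metis not_real_square_gt_zero\<close>)
  finally show "0 < w \<bullet> (1\<^sub>m n *\<^sub>v w)" .
qed auto

lemma scalar_prod_mult_vec_transpose:
  fixes A :: "real mat"
  assumes A: "A \<in> carrier_mat n m" and w: "w \<in> carrier_vec n" and y: "y \<in> carrier_vec m"
  shows "w \<bullet> (A *\<^sub>v y) = (transpose_mat A *\<^sub>v w) \<bullet> y"
proof -
  have "transpose_mat A *\<^sub>v w = vec m (\<lambda>j. w \<bullet> col A j)"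
    using A w by (auto intro!: eq_vecI comm_scalar_prod[of _ n])
  moreover have "A *\<^sub>v y = vec n (\<lambda>i. row A i \<bullet> y)" using A y by (auto intro!: eq_vecI)
  ultimately show ?thesis using assoc_scalar_prod[OF w A y] by simp
qed

lemma pos_semidef_congruence:
  fixes A G :: "real mat"
  assumes A: "pos_semidef m A" and G: "G \<in> carrier_mat m n"
  shows "pos_semidef n (transpose_mat G * A * G)"
  unfolding pos_semidef_def
proof (intro conjI ballI)
  have CA: "A \<in> carrier_mat m m" and sym: "transpose_mat A = A" using A unfolding pos_semidef_def by auto
  thus "transpose_mat G * A * G \<in> carrier_mat n n" using G by auto
  show "transpose_mat (transpose_mat G * A * G) = transpose_mat G * A * G"
    using CA G sym by (simp add: transpose_mult_dim assoc_mult_mat_dim carrier_matD)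
  fix w :: "real vec" assume w: "w \<in> carrier_vec n"
  have Gw: "G *\<^sub>v w \<in> carrier_vec m" using G w by auto
  have "w \<bullet> ((transpose_mat G * A * G) *\<^sub>v w) = w \<bullet> (transpose_mat G *\<^sub>v (A *\<^sub>v (G *\<^sub>v w)))"
    using assoc_mult_mat_vec[of "transpose_mat G * A" n m G n w]
      assoc_mult_mat_vec[of "transpose_mat G" n m A m "G *\<^sub>v w"] CA G w by auto
  also have "\<dots> = (G *\<^sub>v w) \<bullet> (A *\<^sub>v (G *\<^sub>v w))"
    using scalar_prod_mult_vec_transpose[of "transpose_mat G" n m w "A *\<^sub>v (G *\<^sub>v w)"] G w CA by simp
  finally show "w \<bullet> ((transpose_mat G * A * G) *\<^sub>v w) \<ge> 0" using A Gw unfolding pos_semidef_def by simp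
qed

lemma pos_semidef_sandwich:
  assumes R: "pos_def m R" and H: "H \<in> carrier_mat n m"
  shows "pos_semidef n (H * R * transpose_mat H)"
  using pos_semidef_congruence[OF pos_def_imp_pos_semidef[OF R], of "transpose_mat H" n] H by simp

lemma pos_def_add_pos_semidef:
  assumes A: "pos_def n A" and B: "pos_semidef n B"
  shows "pos_def n (A + B)"
  unfolding pos_def_def
proof (intro conjI ballI impI)
  have CA: "A \<in> carrier_mat n n" and CB: "B \<in> carrier_mat n n"
    using A B unfolding pos_def_def pos_semidef_def by auto
  thus "A + B \<in> carrier_mat n n" by auto
  show "transpose_mat (A + B) = A + B"
    using A B transpose_add[OF CA CB] unfolding pos_def_def pos_semidef_def by auto
  fix w :: "real vec" assume w: "w \<in> carrier_vec n" "w \<noteq> 0\<^sub>v n"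
  have "w \<bullet> ((A + B) *\<^sub>v w) = w \<bullet> (A *\<^sub>v w) + w \<bullet> (B *\<^sub>v w)"
    using CA CB w by (simp add: add_mult_distrib_mat_vec[OF CA CB w(1)] scalar_prod_add_distrib[of _ n])
  moreover have "w \<bullet> (A *\<^sub>v w) > 0" using A w unfolding pos_def_def by auto
  moreover have "w \<bullet> (B *\<^sub>v w) \<ge> 0" using B w unfolding pos_semidef_def by auto
  ultimately show "w \<bullet> ((A + B) *\<^sub>v w) > 0" by linarith
qed

lemma pos_def_add_sandwich:
  assumes K: "pos_def n K" and R: "pos_def m R" and H: "H \<in> carrier_mat n m"
  shows "pos_def n (K + H * R * transpose_mat H)"
  by (rule pos_def_add_pos_semidef[OF K pos_semidef_sandwich[OF R H]])

lemma det_neq_0_if_quad_form_neq_0: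
  fixes A :: "real mat"
  assumes A: "A \<in> carrier_mat n n" and q: "\<And>w. w \<in> carrier_vec n \<Longrightarrow> w \<noteq> 0\<^sub>v n \<Longrightarrow> w \<bullet> (A *\<^sub>v w) \<noteq> 0"
  shows "det A \<noteq> 0"
proof
  assume "det A = 0"
  then obtain v where v: "v \<in> carrier_vec n" "v \<noteq> 0\<^sub>v n" "A *\<^sub>v v = 0\<^sub>v n"
    using det_0_iff_vec_prod_zero[OF A] by auto
  thus False using q[OF v(1,2)] by simp
qed

lemma pos_def_det_neq_0:
  assumes "pos_def n P"
  shows "det P \<noteq> 0"
proof (rule det_neq_0_if_quad_form_neq_0)
  show "P \<in> carrier_mat n n" using assms by (rule pos_def_carrier)
  fix w :: "real vec" assume "w \<in> carrier_vec n" "w \<noteq> 0\<^sub>v n"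
  thus "w \<bullet> (P *\<^sub>v w) \<noteq> 0" using assms unfolding pos_def_def by force
qed

lemma pos_def_mat_inv:
  assumes P: "pos_def n P"
  shows "pos_def n (mat_inv P)"
proof -
  have C: "P \<in> carrier_mat n n" using P by (rule pos_def_carrier)
  have d: "det P \<noteq> 0" using P by (rule pos_def_det_neq_0)
  have "w \<bullet> (mat_inv P *\<^sub>v w) > 0" if w: "w \<in> carrier_vec n" "w \<noteq> 0\<^sub>v n" for w
  proof -
    let ?y = "mat_inv P *\<^sub>v w"
    have y: "?y \<in> carrier_vec n" by (rule mult_mat_vec_carrier[OF mat_inv_carrier[OF C] w(1)])
    have Py: "P *\<^sub>v ?y = w"
      using mat_inv_right[OF C d] mat_inv_carrier[OF C] C w
      by (simp add: assoc_mult_mat_vec[symmetric, of P n n "mat_inv P" n])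
    have "?y \<noteq> 0\<^sub>v n"
    proof
      assume "?y = 0\<^sub>v n"
      hence "w = P *\<^sub>v 0\<^sub>v n" using Py by simp
      also have "\<dots> = 0\<^sub>v n" using C by (auto intro!: eq_vecI simp: scalar_prod_def)
      finally show False using w by simp
    qed
    hence "?y \<bullet> (P *\<^sub>v ?y) > 0" using P y unfolding pos_def_def by auto
    thus ?thesis unfolding Py comm_scalar_prod[OF y w(1)] .
  qed
  thus ?thesis unfolding pos_def_def using C transpose_mat_inv[OF C d pos_def_sym[OF P]] by auto
qed

definition quad_form :: "nat \<Rightarrow> (nat \<Rightarrow> nat \<Rightarrow> real) \<Rightarrow> (nat \<Rightarrow> real) \<Rightarrow> real" where
  "quad_form n P v = (\<Sum>a<n. \<Sum>b<n. v a * P a b * v b)"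

lemma quad_form_mat:
  fixes P :: "real mat"
  assumes "P \<in> carrier_mat n n" "w \<in> carrier_vec n"
  shows "w \<bullet> (P *\<^sub>v w) = quad_form n (\<lambda>a b. P $$ (a,b)) (\<lambda>a. w $ a)"
  unfolding quad_form_def using assms
  by (auto simp: scalar_prod_def row_def sum_distrib_left atLeast0LessThan mult.assoc intro!: sum.cong)

text \<open>The determinant cannot vanish on the segment from \<open>1\<^sub>m n\<close> to \<open>P\<close>, which consists of
  positive definite matrices; by the intermediate value theorem it keeps the sign of \<open>det (1\<^sub>m n) = 1\<close>.\<close>

lemma pos_def_det_pos:
  assumes P: "pos_def n P"
  shows "det P > 0"
proof (rule ccontr)
  assume neg: "\<not> det P > 0"
  have C: "P \<in> carrier_mat n n" using P by (rule pos_def_carrier)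
  define Q where "Q s = 1\<^sub>m n + s \<cdot>\<^sub>m (P - 1\<^sub>m n)" for s
  have "Q 0 = 1\<^sub>m n" unfolding Q_def using C by (auto intro!: eq_matI)
  hence "det (Q 0) = 1" by simp
  moreover have "Q 1 = P" unfolding Q_def using C by (auto intro!: eq_matI)
  moreover have "\<forall>s. 0 \<le> s \<and> s \<le> 1 \<longrightarrow> isCont (\<lambda>s. det (Q s)) s"
    unfolding Q_def using C by (auto intro!: isCont_det_line)
  ultimately obtain s where s: "0 \<le> s" "s \<le> 1" "det (Q s) = 0"
    using IVT2[of "\<lambda>s. det (Q s)" 1 0 0] neg by auto
  have "w \<bullet> (Q s *\<^sub>v w) \<noteq> 0" if w: "w \<in> carrier_vec n" "w \<noteq> 0\<^sub>v n" for w
  proof -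
    have "w \<bullet> (Q s *\<^sub>v w) = quad_form n (\<lambda>a b. Q s $$ (a,b)) (\<lambda>a. w $ a)"
      using C w by (intro quad_form_mat) (auto simp: Q_def)
    also have "\<dots> = (1 - s) * quad_form n (\<lambda>a b. 1\<^sub>m n $$ (a,b)) (\<lambda>a. w $ a)
        + s * quad_form n (\<lambda>a b. P $$ (a,b)) (\<lambda>a. w $ a)"
      unfolding quad_form_def sum_distrib_left sum.distrib[symmetric] using C
      by (intro sum.cong refl) (auto simp: Q_def algebra_simps)
    finally have "w \<bullet> (Q s *\<^sub>v w) = (1 - s) * (w \<bullet> (1\<^sub>m n *\<^sub>v w)) + s * (w \<bullet> (P *\<^sub>v w))"
      unfolding quad_form_mat[OF C w(1)] quad_form_mat[OF one_carrier_mat w(1)] .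
    moreover have "w \<bullet> (1\<^sub>m n *\<^sub>v w) > 0" "w \<bullet> (P *\<^sub>v w) > 0"
      using pos_def_one P w unfolding pos_def_def by auto
    ultimately have "w \<bullet> (Q s *\<^sub>v w) > 0"
      using s by (cases "s = 0") (auto intro!: add_nonneg_pos mult_nonneg_nonneg mult_pos_pos)
    thus ?thesis by simp
  qed
  hence "det (Q s) \<noteq> 0" using C by (intro det_neq_0_if_quad_form_neq_0[of _ n]) (auto simp: Q_def)
  thus False using s by simp
qed

lemma quad_form_add_unit:
  fixes P :: "nat \<Rightarrow> nat \<Rightarrow> real" and v :: "nat \<Rightarrow> real" and c :: real
  assumes k: "k < n"
  shows "quad_form n P (\<lambda>a. v a + c * (if a = k then 1 else 0)) =
     quad_form n P v + c * (\<Sum>b<n. P k b * v b) + c * (\<Sum>a<n. v a * P a k) + c * c * P k k"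
proof -
  have delta_r: "(\<Sum>b<n. f b * (if b = k then 1 else 0)) = f k" for f :: "nat \<Rightarrow> real"
    using k by (simp add: if_distrib[of "\<lambda>x. _ * x"] sum.delta cong: if_cong)
  have delta_l: "(\<Sum>b<n. (if b = k then 1 else 0) * f b) = f k" for f :: "nat \<Rightarrow> real"
    using k by (simp add: if_distrib[of "\<lambda>x. x * _"] sum.delta cong: if_cong)
  have "quad_form n P (\<lambda>a. v a + c * (if a = k then 1 else 0)) =
     quad_form n P v + (\<Sum>a<n. \<Sum>b<n. (c * v a * P a b) * (if b = k then 1 else 0))
     + (\<Sum>a<n. (if a = k then 1 else 0) * (\<Sum>b<n. c * P a b * v b))
     + (\<Sum>a<n. (if a = k then 1 else 0) * (\<Sum>b<n. (c * c * P a b) * (if b = k then 1 else 0)))"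
    unfolding quad_form_def by (simp add: algebra_simps sum.distrib sum_distrib_left)
  also have "\<dots> = quad_form n P v + (\<Sum>a<n. c * v a * P a k) + (\<Sum>b<n. c * P k b * v b) + c * c * P k k"
    by (simp only: delta_r delta_l)
  finally show ?thesis by (simp add: sum_distrib_left algebra_simps)
qed

lemma quad_form_unit_pos:
  assumes "k < n" and pd: "\<forall>v. (\<exists>a<n. v a \<noteq> 0) \<and> (\<forall>a<k. v a = 0) \<longrightarrow> quad_form n P v > 0"
  shows "P k k > 0"
proof -
  have "quad_form n P (\<lambda>a. if a = k then 1 else 0) > 0" using assms by (intro pd[rule_format]) auto
  thus ?thesis unfolding quad_form_def using assms(1)
    by (simp add: if_distrib[of "\<lambda>x. x * _"] if_distrib[of "\<lambda>x. _ * x"] cong: if_cong)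
qed

text \<open>The quadratic form of the Schur complement of \<open>P k k\<close> at \<open>v\<close> is that of \<open>P\<close> at \<open>v\<close>
  corrected in the \<open>k\<close>-th coordinate so as to minimise it.\<close>

lemma quad_form_schur_complement_pos:
  fixes P :: "nat \<Rightarrow> nat \<Rightarrow> real"
  assumes k: "k < n" and sym: "\<forall>a<n. \<forall>b<n. P a b = P b a"
    and pd: "\<forall>v. (\<exists>a<n. v a \<noteq> 0) \<and> (\<forall>a<k. v a = 0) \<longrightarrow> quad_form n P v > 0"
    and v: "\<exists>a<n. v a \<noteq> 0" "\<forall>a<Suc k. v a = 0"
  shows "quad_form n (\<lambda>a b. P a b - P a k * P b k / P k k) v > 0"
proof -
  define p where "p = P k k"
  have pp: "p > 0" unfolding p_def by (rule quad_form_unit_pos[OF k pd])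
  define s where "s = (\<Sum>b<n. P k b * v b)"
  have s2: "(\<Sum>a<n. v a * P a k) = s" unfolding s_def using sym k
    by (intro sum.cong) (auto simp: mult.commute)
  define w where "w a = v a + (- s / p) * (if a = k then 1 else 0)" for a
  have "quad_form n P w > 0"
  proof (rule pd[rule_format], intro conjI)
    obtain a where a: "a < n" "v a \<noteq> 0" using v by auto
    hence "a \<noteq> k" using v by auto
    thus "\<exists>a<n. w a \<noteq> 0" using a unfolding w_def by auto
    show "\<forall>a<k. w a = 0" using v unfolding w_def by auto
  qed
  also have "quad_form n P w = quad_form n P v - s * s / p"
    unfolding w_def quad_form_add_unit[OF k] s2 s_def[symmetric] p_def[symmetric] using pp
    by (simp add: field_simps)
  also have "\<dots> = quad_form n (\<lambda>a b. P a b - P a k * P b k / p) v"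
  proof -
    have "quad_form n (\<lambda>a b. P a b - P a k * P b k / p) v =
        quad_form n P v - (\<Sum>a<n. \<Sum>b<n. (v a * P a k) * (v b * P b k) / p)"
      unfolding quad_form_def by (simp add: algebra_simps sum_subtractf)
    also have "(\<Sum>a<n. \<Sum>b<n. (v a * P a k) * (v b * P b k) / p) = s * s / p"
      unfolding s2[symmetric] sum_product sum_divide_distrib by simp
    finally show ?thesis by simp
  qed
  finally show ?thesis unfolding p_def .
qed

text \<open>Cholesky's algorithm as an induction: the first remaining row, scaled by the square root
  of its diagonal entry, is split off, and the Schur complement that is left is again
  positive on the remaining coordinates.\<close>

lemma quad_form_gram_decomp:
  fixes P :: "nat \<Rightarrow> nat \<Rightarrow> real"
  shows "k \<le> n \<Longrightarrow> (\<forall>a<n. \<forall>b<n. P a b = P b a) \<Longrightarrow>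
    (\<forall>a<n. \<forall>b<n. (a < k \<or> b < k) \<longrightarrow> P a b = 0) \<Longrightarrow>
    (\<forall>v. (\<exists>a<n. v a \<noteq> 0) \<and> (\<forall>a<k. v a = 0) \<longrightarrow> quad_form n P v > 0) \<Longrightarrow>
    \<exists>u. \<forall>a<n. \<forall>b<n. P a b = (\<Sum>l\<in>{k..<n}. u l a * u l b)"
proof (induction "n - k" arbitrary: k P)
  case 0
  thus ?case by auto
next
  case (Suc m)
  hence k: "k < n" by simp
  note sym = Suc.prems(2) and zero = Suc.prems(3) and pd = Suc.prems(4)
  define p where "p = P k k"
  have pp: "p > 0" unfolding p_def by (rule quad_form_unit_pos[OF k pd])
  define u0 where "u0 a = P a k / sqrt p" for a
  define P' where "P' a b = P a b - u0 a * u0 b" for a b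
  have uu: "u0 a * u0 b = P a k * P b k / p" for a b
    unfolding u0_def using pp by (simp add: field_simps)
  have "\<exists>u. \<forall>a<n. \<forall>b<n. P' a b = (\<Sum>l\<in>{Suc k..<n}. u l a * u l b)"
  proof (rule Suc.hyps(1))
    show "m = n - Suc k" "Suc k \<le> n" using Suc.hyps(2) k by simp_all
    show "\<forall>a<n. \<forall>b<n. P' a b = P' b a" unfolding P'_def using sym by (simp add: mult.commute)
    show "\<forall>a<n. \<forall>b<n. (a < Suc k \<or> b < Suc k) \<longrightarrow> P' a b = 0"
    proof (intro allI impI)
      fix a b assume ab: "a < n" "b < n" "a < Suc k \<or> b < Suc k"
      show "P' a b = 0"
      proof (cases "a < k \<or> b < k")
        case True
        hence "P a b = 0" "P a k = 0 \<or> P b k = 0" using zero ab k sym by auto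
        thus ?thesis unfolding P'_def uu by auto
      next
        case False
        hence "a = k \<or> b = k" using ab by auto
        thus ?thesis unfolding P'_def uu p_def using pp sym ab k p_def by (auto simp: field_simps)
      qed
    qed
    show "\<forall>v. (\<exists>a<n. v a \<noteq> 0) \<and> (\<forall>a<Suc k. v a = 0) \<longrightarrow> 0 < quad_form n P' v"
      unfolding P'_def uu p_def using quad_form_schur_complement_pos[OF k sym pd] by blast
  qed
  then obtain u' where u': "\<forall>a<n. \<forall>b<n. P' a b = (\<Sum>l\<in>{Suc k..<n}. u' l a * u' l b)" by blast
  show ?case
  proof (intro exI allI impI)
    fix a b assume ab: "a < n" "b < n"
    let ?u = "u'(k := u0)"
    have "(\<Sum>l\<in>{k..<n}. ?u l a * ?u l b) = u0 a * u0 b + (\<Sum>l\<in>{Suc k..<n}. u' l a * u' l b)"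
      by (simp add: sum.atLeast_Suc_lessThan[OF k])
    also have "\<dots> = P a b" using u'[rule_format, OF ab] unfolding P'_def by simp
    finally show "P a b = (\<Sum>l\<in>{k..<n}. ?u l a * ?u l b)" ..
  qed
qed

lemma pos_def_factor:
  assumes P: "pos_def n P"
  shows "\<exists>U\<in>carrier_mat n n. P = U * transpose_mat U"
proof -
  have C: "P \<in> carrier_mat n n" using P by (rule pos_def_carrier)
  have sym: "\<forall>a<n. \<forall>b<n. P $$ (a,b) = P $$ (b,a)"
    using C pos_def_sym[OF P] by (metis index_transpose_mat(1) carrier_matD)
  have pd: "\<forall>v. (\<exists>a<n. v a \<noteq> 0) \<and> (\<forall>a<0. v a = 0) \<longrightarrow> quad_form n (\<lambda>a b. P $$ (a,b)) v > 0"
  proof (intro allI impI)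
    fix v :: "nat \<Rightarrow> real" assume "(\<exists>a<n. v a \<noteq> 0) \<and> (\<forall>a<0. v a = 0)"
    then obtain a where a: "a < n" "v a \<noteq> 0" by auto
    have w: "vec n v \<in> carrier_vec n" by simp
    have "vec n v \<noteq> 0\<^sub>v n" using a by (metis index_vec index_zero_vec(1))
    hence "vec n v \<bullet> (P *\<^sub>v vec n v) > 0" using P w unfolding pos_def_def by auto
    also have "vec n v \<bullet> (P *\<^sub>v vec n v) = quad_form n (\<lambda>a b. P $$ (a,b)) v"
      unfolding quad_form_mat[OF C w] quad_form_def by (intro sum.cong) auto
    finally show "quad_form n (\<lambda>a b. P $$ (a,b)) v > 0" .
  qed
  obtain u where u: "\<forall>a<n. \<forall>b<n. P $$ (a,b) = (\<Sum>l\<in>{0..<n}. u l a * u l b)"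
    using quad_form_gram_decomp[of 0 n "\<lambda>a b. P $$ (a,b)", OF _ sym _ pd] by auto
  define U where "U = mat n n (\<lambda>(a,l). u l a)"
  have "P = U * transpose_mat U"
    using C u unfolding U_def by (auto intro!: eq_matI simp: scalar_prod_def row_def col_def)
  thus ?thesis unfolding U_def by auto
qed

lemma mtrace_mult_factor:
  fixes Q U :: "real mat"
  assumes Q: "Q \<in> carrier_mat n n" and U: "U \<in> carrier_mat n n"
  shows "mtrace (Q * (U * transpose_mat U)) = (\<Sum>l<n. col U l \<bullet> (Q *\<^sub>v col U l))"
proof -
  have "mtrace (Q * (U * transpose_mat U)) = mtrace (transpose_mat U * (Q * U))"
    using Q U mtrace_mult_comm[of "Q * U" n n "transpose_mat U"] by (simp add: assoc_mult_mat_dim)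
  also have "\<dots> = (\<Sum>l<n. col U l \<bullet> (Q *\<^sub>v col U l))"
    unfolding mtrace_def using Q U by (auto intro!: sum.cong)
  finally show ?thesis .
qed

lemma mtrace_pos_semidef_mult_nonneg:
  assumes Q: "pos_semidef n Q" and P: "pos_def n P"
  shows "mtrace (Q * P) \<ge> 0"
proof -
  obtain U where U: "U \<in> carrier_mat n n" "P = U * transpose_mat U" using pos_def_factor[OF P] by auto
  have Qc: "Q \<in> carrier_mat n n" using Q unfolding pos_semidef_def by auto
  show ?thesis unfolding U(2) mtrace_mult_factor[OF Qc U(1)]
    using Q U(1) unfolding pos_semidef_def by (intro sum_nonneg) auto
qed

lemma pos_def_quad_nonneg:
  assumes "pos_def n P" "dim_vec w = n"
  shows "w \<bullet> (P *\<^sub>v w) \<ge> 0"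
  using pos_def_imp_pos_semidef[OF assms(1)] assms(2) unfolding pos_semidef_def carrier_vec_def by auto

lemma mtrace_sandwich_eq_sum:
  fixes D :: "real mat"
  assumes P: "pos_def n P" and U: "U \<in> carrier_mat n n" "P = U * transpose_mat U"
    and D: "D \<in> carrier_mat n n" and sym: "transpose_mat D = D"
  shows "mtrace (P * D * P * D) = (\<Sum>l<n. (D *\<^sub>v col U l) \<bullet> (P *\<^sub>v (D *\<^sub>v col U l)))"
proof -
  have C: "P \<in> carrier_mat n n" using P by (rule pos_def_carrier)
  let ?Q = "D * P * D"
  have Q: "?Q \<in> carrier_mat n n" using C D by auto
  have "mtrace (P * D * P * D) = mtrace (?Q * P)"
    using C D mtrace_mult_comm[OF C Q] by (simp add: assoc_mult_mat_dim carrier_matD)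
  also have "\<dots> = (\<Sum>l<n. col U l \<bullet> (?Q *\<^sub>v col U l))"
    using mtrace_mult_factor[OF Q U(1)] U(2) by simp
  also have "\<dots> = (\<Sum>l<n. (D *\<^sub>v col U l) \<bullet> (P *\<^sub>v (D *\<^sub>v col U l)))"
  proof (rule sum.cong[OF refl])
    fix l assume "l \<in> {..<n}"
    have c: "col U l \<in> carrier_vec n" using U by auto
    have "?Q *\<^sub>v col U l = D *\<^sub>v (P *\<^sub>v (D *\<^sub>v col U l))"
      using C D c by (simp add: assoc_mult_mat_vec[of _ n n _ n])
    moreover have "col U l \<bullet> (D *\<^sub>v (P *\<^sub>v (D *\<^sub>v col U l))) =
        (transpose_mat D *\<^sub>v col U l) \<bullet> (P *\<^sub>v (D *\<^sub>v col U l))"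
      using C D c by (intro scalar_prod_mult_vec_transpose) auto
    ultimately show "col U l \<bullet> (?Q *\<^sub>v col U l) = (D *\<^sub>v col U l) \<bullet> (P *\<^sub>v (D *\<^sub>v col U l))"
      using sym by simp
  qed
  finally show ?thesis .
qed

lemma mtrace_sandwich_nonneg:
  assumes P: "pos_def n P" and D: "D \<in> carrier_mat n n" and sym: "transpose_mat D = D"
  shows "mtrace (P * D * P * D) \<ge> 0"
proof -
  obtain U where U: "U \<in> carrier_mat n n" "P = U * transpose_mat U" using pos_def_factor[OF P] by auto
  have "(D *\<^sub>v col U l) \<bullet> (P *\<^sub>v (D *\<^sub>v col U l)) \<ge> 0" for l
    using D by (intro pos_def_quad_nonneg[OF P]) auto
  thus ?thesis unfolding mtrace_sandwich_eq_sum[OF P U D sym] by (intro sum_nonneg)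
qed

lemma mtrace_sandwich_pos:
  assumes P: "pos_def n P" and D: "D \<in> carrier_mat n n" and sym: "transpose_mat D = D"
    and nz: "D \<noteq> 0\<^sub>m n n"
  shows "mtrace (P * D * P * D) > 0"
proof (rule ccontr)
  assume "\<not> mtrace (P * D * P * D) > 0"
  obtain U where U: "U \<in> carrier_mat n n" "P = U * transpose_mat U" using pos_def_factor[OF P] by auto
  have C: "P \<in> carrier_mat n n" using P by (rule pos_def_carrier)
  have nonneg: "(D *\<^sub>v col U l) \<bullet> (P *\<^sub>v (D *\<^sub>v col U l)) \<ge> 0" for l
    using D by (intro pos_def_quad_nonneg[OF P]) auto
  have "(\<Sum>l<n. (D *\<^sub>v col U l) \<bullet> (P *\<^sub>v (D *\<^sub>v col U l))) = 0"
    using \<open>\<not> mtrace (P * D * P * D) > 0\<close> mtrace_sandwich_nonneg[OF P D sym]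
    unfolding mtrace_sandwich_eq_sum[OF P U D sym] by linarith
  hence zero: "\<forall>l<n. (D *\<^sub>v col U l) \<bullet> (P *\<^sub>v (D *\<^sub>v col U l)) = 0"
    using sum_nonneg_eq_0_iff[of "{..<n}", OF _ nonneg] by simp
  have Dz: "D *\<^sub>v col U l = 0\<^sub>v n" if l: "l < n" for l
  proof (rule ccontr)
    assume "D *\<^sub>v col U l \<noteq> 0\<^sub>v n"
    moreover have "D *\<^sub>v col U l \<in> carrier_vec n" using D by (auto intro!: carrier_vecI)
    ultimately have "(D *\<^sub>v col U l) \<bullet> (P *\<^sub>v (D *\<^sub>v col U l)) > 0"
      using P unfolding pos_def_def by blast
    thus False using zero l by simp
  qed
  have DU: "D * U = 0\<^sub>m n n"
  proof (rule eq_matI)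
    fix i j assume ij: "i < dim_row (0\<^sub>m n n :: real mat)" "j < dim_col (0\<^sub>m n n :: real mat)"
    have "(D * U) $$ (i,j) = (D *\<^sub>v col U j) $ i" using ij D U by auto
    thus "(D * U) $$ (i,j) = 0\<^sub>m n n $$ (i,j)" using Dz ij by auto
  qed (use D U in auto)
  have "D = D * (P * mat_inv P)" using mat_inv_right[OF C pos_def_det_neq_0[OF P]] D by simp
  also have "\<dots> = (D * U) * (transpose_mat U * mat_inv P)"
    unfolding U(2) using U(1) D C by (simp add: assoc_mult_mat_dim carrier_matD)
  also have "\<dots> = 0\<^sub>m n n" unfolding DU using U C by simp
  finally show False using nz by simp
qed

lemma mtrace_sandwich_nonneg_1:
  fixes Y B :: "real mat"
  assumes "Y \<in> carrier_mat 1 1" "B \<in> carrier_mat 1 1"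
  shows "mtrace (Y * B * Y * B) \<ge> 0"
proof -
  have "mtrace (Y * B * Y * B) = (Y $$ (0,0) * B $$ (0,0)) * (Y $$ (0,0) * B $$ (0,0))"
    using assms unfolding mtrace_def by (simp add: scalar_prod_def row_def col_def)
  thus ?thesis by simp
qed

lemma mtrace_sandwich_cross_le:
  fixes X Y :: "real mat"
  assumes P: "pos_def n P" and X: "X \<in> carrier_mat n n" "transpose_mat X = X"
    and Y: "Y \<in> carrier_mat n n" "transpose_mat Y = Y"
  shows "mtrace (P * X * P * Y) + mtrace (P * Y * P * X) \<le> mtrace (P * X * P * X) + mtrace (P * Y * P * Y)"
proof -
  have C: "P \<in> carrier_mat n n" using P by (rule pos_def_carrier)
  have "0 \<le> mtrace (P * (X - Y) * P * (X - Y))"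
    using X Y transpose_minus[OF X(1) Y(1)] by (intro mtrace_sandwich_nonneg[OF P]) auto
  also have "P * (X - Y) * P * (X - Y) = (P * X * P * X - P * Y * P * X) - (P * X * P * Y - P * Y * P * Y)"
    using C X Y by (simp add: mult_minus_distrib_dim minus_mult_distrib_dim carrier_matD)
  also have "mtrace \<dots> = mtrace (P * X * P * X) - mtrace (P * Y * P * X) - (mtrace (P * X * P * Y) - mtrace (P * Y * P * Y))"
    using C X Y by (simp add: mtrace_minus_dim carrier_matD)
  finally show ?thesis by simp
qed

lemma mtrace_sandwich_mono:
  fixes K H R X :: "real mat"
  assumes K: "pos_def n K" and R: "pos_def m R" and H: "H \<in> carrier_mat n m"
    and X: "X \<in> carrier_mat n n" and Xs: "transpose_mat X = X"
  defines "C \<equiv> H * R * transpose_mat H"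
  shows "mtrace (K * X * K * X) \<le> mtrace ((K + C) * X * (K + C) * X)"
proof -
  have Kc: "K \<in> carrier_mat n n" and Rc: "R \<in> carrier_mat m m" using K R by (auto simp: pos_def_carrier)
  have Cc: "C \<in> carrier_mat n n" unfolding C_def using H Rc by auto
  note dims = carrier_matD[OF Kc] carrier_matD[OF Rc] carrier_matD[OF H] carrier_matD[OF X]
    carrier_matD[OF Cc]
  have "(K + C) * X * (K + C) * X = K * X * K * X + (C * X * K * X + (K * X * C * X + C * X * C * X))"
    using dims by (simp add: mult_add_distrib_dim add_mult_distrib_dim assoc_add_dim)
  hence expand: "mtrace ((K + C) * X * (K + C) * X) =
      mtrace (K * X * K * X) + mtrace (K * X * C * X) + mtrace (C * X * K * X) + mtrace (C * X * C * X)"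
    using dims by (simp add: mtrace_add_dim)
  have KC: "mtrace (K * X * C * X) \<ge> 0"
  proof -
    have "mtrace (K * X * C * X) = mtrace ((transpose_mat (X * H) * K * (X * H)) * R)"
      unfolding C_def using dims Xs mtrace_mult_comm_dim[of "K * X * H * R" "transpose_mat H * X"]
      by (simp add: transpose_mult_dim assoc_mult_mat_dim)
    moreover have "pos_semidef m (transpose_mat (X * H) * K * (X * H))"
      using X H by (intro pos_semidef_congruence[OF pos_def_imp_pos_semidef[OF K]]) auto
    ultimately show ?thesis using mtrace_pos_semidef_mult_nonneg[OF _ R] by simp
  qed
  have CK: "mtrace (C * X * K * X) = mtrace (K * X * C * X)"
    using dims mtrace_mult_comm_dim[of "C * X" "K * X"] by (simp add: assoc_mult_mat_dim)
  have CC: "mtrace (C * X * C * X) \<ge> 0"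
  proof -
    define G where "G = transpose_mat H * X * H"
    have Gc: "G \<in> carrier_mat m m" unfolding G_def using X H by auto
    have Gs: "transpose_mat G = G" unfolding G_def using dims Xs by (simp add: transpose_mult_dim assoc_mult_mat_dim)
    have "mtrace (C * X * C * X) = mtrace (R * G * R * G)"
      unfolding C_def G_def using dims mtrace_mult_comm_dim[of H "R * transpose_mat H * X * H * R * transpose_mat H * X"]
      by (simp add: assoc_mult_mat_dim)
    thus ?thesis using mtrace_sandwich_nonneg[OF R Gc Gs] by simp
  qed
  show ?thesis using expand KC CK CC by linarith
qed

text \<open>Since \<open>tr (P X P Y)\<close> is an inner product in \<open>X, Y\<close> for fixed \<open>P\<close>, both inequalities below
  are instances of Cauchy-Schwarz (\<open>mtrace_sandwich_cross_le\<close>) in which the cross terms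
  collapse to the smaller side.\<close>

lemma mtrace_sandwich_mat_inv:
  fixes P B W :: "real mat"
  assumes P: "P \<in> carrier_mat n n" "det P \<noteq> 0" and B: "B \<in> carrier_mat n n" and W: "W \<in> carrier_mat n n"
  shows "mtrace (P * (mat_inv P * B * mat_inv P) * P * W) = mtrace (B * W)"
  using P B W
  by (simp add: assoc_mult_mat_dim mat_inv_cancel_left[OF P] mat_inv_cancel_left'[OF P] carrier_matD)

lemma mtrace_inv_sandwich_antimono:
  fixes K H R B :: "real mat"
  assumes K: "pos_def n K" and R: "pos_def m R" and H: "H \<in> carrier_mat n m"
    and B: "B \<in> carrier_mat n n" and Bs: "transpose_mat B = B"
  defines "C \<equiv> H * R * transpose_mat H"
  shows "mtrace (mat_inv (K + C) * B * mat_inv (K + C) * B) \<le> mtrace (mat_inv K * B * mat_inv K * B)"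
proof -
  have Kc: "K \<in> carrier_mat n n" and dK: "det K \<noteq> 0" using K by (auto simp: pos_def_carrier pos_def_det_neq_0)
  have \<Sigma>: "pos_def n (K + C)" unfolding C_def by (rule pos_def_add_sandwich[OF K R H])
  have \<Sigma>c: "K + C \<in> carrier_mat n n" and d\<Sigma>: "det (K + C) \<noteq> 0"
    using \<Sigma> by (auto simp: pos_def_carrier pos_def_det_neq_0)
  have Cc: "C \<in> carrier_mat n n" unfolding C_def using H R by (auto simp: pos_def_carrier)
  note dims = carrier_matD[OF Kc] carrier_matD[OF Cc] carrier_matD[OF B]
  define X where "X = mat_inv (K + C) * B * mat_inv (K + C)"
  define Y where "Y = mat_inv K * B * mat_inv K"
  have Xc: "X \<in> carrier_mat n n" and Yc: "Y \<in> carrier_mat n n"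
    unfolding X_def Y_def using mat_inv_carrier[OF \<Sigma>c] mat_inv_carrier[OF Kc] B by auto
  have Xs: "transpose_mat X = X" and Ys: "transpose_mat Y = Y"
    unfolding X_def Y_def using \<Sigma>c Kc B Bs transpose_mat_inv[OF \<Sigma>c d\<Sigma> pos_def_sym[OF \<Sigma>]]
      transpose_mat_inv[OF Kc dK pos_def_sym[OF K]] dims
    by (simp_all add: transpose_mult_dim assoc_mult_mat_dim)
  define Ta where "Ta = mtrace (mat_inv (K + C) * B * mat_inv (K + C) * B)"
  define Tb where "Tb = mtrace (mat_inv K * B * mat_inv K * B)"
  have BX: "mtrace (B * X) = Ta" and BY: "mtrace (B * Y) = Tb"
    unfolding X_def Y_def Ta_def Tb_def using dims
    by (auto simp: mtrace_mult_comm_dim[of B] assoc_mult_mat_dim)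
  have "mtrace (K * Y * K * X) = Ta" "mtrace (K * Y * K * Y) = Tb"
    unfolding Y_def using mtrace_sandwich_mat_inv[OF Kc dK B] Xc Yc BX BY by (simp_all add: Y_def)
  moreover have "mtrace (K * X * K * Y) = mtrace (K * Y * K * X)"
    using dims carrier_matD[OF Xc] carrier_matD[OF Yc] mtrace_mult_comm_dim[of "K * X" "K * Y"]
    by (simp add: assoc_mult_mat_dim)
  moreover have "mtrace (K * X * K * X) \<le> Ta"
  proof -
    have "mtrace (K * X * K * X) \<le> mtrace ((K + C) * X * (K + C) * X)"
      unfolding C_def by (rule mtrace_sandwich_mono[OF K R H Xc Xs])
    also have "\<dots> = Ta" unfolding X_def using mtrace_sandwich_mat_inv[OF \<Sigma>c d\<Sigma> B Xc] BX by (simp add: X_def)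
    finally show ?thesis .
  qed
  ultimately have "Ta \<le> Tb" using mtrace_sandwich_cross_le[OF K Xc Xs Yc Ys] by linarith
  thus ?thesis unfolding Ta_def Tb_def .
qed

lemma mtrace_inv_sandwich_compress:
  fixes \<Sigma> E B :: "real mat"
  assumes \<Sigma>: "pos_def N \<Sigma>" and E: "E \<in> carrier_mat n N"
    and B: "B \<in> carrier_mat N N" and Bs: "transpose_mat B = B"
    and d2: "det (E * \<Sigma> * transpose_mat E) \<noteq> 0"
  shows "mtrace (mat_inv (E * \<Sigma> * transpose_mat E) * (E * B * transpose_mat E) *
                 mat_inv (E * \<Sigma> * transpose_mat E) * (E * B * transpose_mat E))
         \<le> mtrace (mat_inv \<Sigma> * B * mat_inv \<Sigma> * B)"
proof -
  have \<Sigma>c: "\<Sigma> \<in> carrier_mat N N" and d\<Sigma>: "det \<Sigma> \<noteq> 0" using \<Sigma> by (auto simp: pos_def_carrier pos_def_det_neq_0)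
  define \<Sigma>2 where "\<Sigma>2 = E * \<Sigma> * transpose_mat E"
  define B2 where "B2 = E * B * transpose_mat E"
  have \<Sigma>2c: "\<Sigma>2 \<in> carrier_mat n n" and B2c: "B2 \<in> carrier_mat n n"
    unfolding \<Sigma>2_def B2_def using E \<Sigma>c B by auto
  note dims = carrier_matD[OF \<Sigma>c] carrier_matD[OF E] carrier_matD[OF B] carrier_matD[OF \<Sigma>2c]
    carrier_matD[OF B2c]
  have d2': "det \<Sigma>2 \<noteq> 0" unfolding \<Sigma>2_def using d2 .
  have \<Sigma>2s: "transpose_mat \<Sigma>2 = \<Sigma>2"
    unfolding \<Sigma>2_def using dims pos_def_sym[OF \<Sigma>] by (simp add: transpose_mult_dim assoc_mult_mat_dim)
  have B2s: "transpose_mat B2 = B2" unfolding B2_def using dims Bs by (simp add: transpose_mult_dim assoc_mult_mat_dim)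
  define X where "X = mat_inv \<Sigma> * B * mat_inv \<Sigma>"
  define Z where "Z = mat_inv \<Sigma>2 * B2 * mat_inv \<Sigma>2"
  define Y where "Y = transpose_mat E * Z * E"
  have Xc: "X \<in> carrier_mat N N" and Zc: "Z \<in> carrier_mat n n" and Yc: "Y \<in> carrier_mat N N"
    unfolding X_def Y_def Z_def using mat_inv_carrier[OF \<Sigma>c] mat_inv_carrier[OF \<Sigma>2c] B B2c E by auto
  have Xs: "transpose_mat X = X" and Zs: "transpose_mat Z = Z"
    unfolding X_def Z_def using dims Bs B2s transpose_mat_inv[OF \<Sigma>c d\<Sigma> pos_def_sym[OF \<Sigma>]]
      transpose_mat_inv[OF \<Sigma>2c d2' \<Sigma>2s]
    by (simp_all add: transpose_mult_dim assoc_mult_mat_dim)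
  have Ys: "transpose_mat Y = Y"
    unfolding Y_def using dims carrier_matD[OF Zc] Zs by (simp add: transpose_mult_dim assoc_mult_mat_dim)
  define T0 where "T0 = mtrace (mat_inv \<Sigma> * B * mat_inv \<Sigma> * B)"
  define T1 where "T1 = mtrace (mat_inv \<Sigma>2 * B2 * mat_inv \<Sigma>2 * B2)"
  have B2Z: "mtrace (B2 * Z) = T1"
    unfolding Z_def T1_def using dims mtrace_mult_comm_dim[of B2 "mat_inv \<Sigma>2 * B2 * mat_inv \<Sigma>2"]
    by (simp add: assoc_mult_mat_dim)
  have "mtrace (\<Sigma> * X * \<Sigma> * X) = T0"
    using mtrace_sandwich_mat_inv[OF \<Sigma>c d\<Sigma> B Xc] dims mtrace_mult_comm_dim[of B X]
    unfolding T0_def by (simp add: X_def assoc_mult_mat_dim)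
  moreover have XY: "mtrace (\<Sigma> * X * \<Sigma> * Y) = T1"
  proof -
    have "mtrace (\<Sigma> * X * \<Sigma> * Y) = mtrace (B * Y)"
      unfolding X_def by (rule mtrace_sandwich_mat_inv[OF \<Sigma>c d\<Sigma> B Yc])
    also have "\<dots> = mtrace (B2 * Z)"
      unfolding Y_def B2_def using dims carrier_matD[OF Zc] mtrace_mult_comm_dim[of "B * transpose_mat E * Z" E]
      by (simp add: assoc_mult_mat_dim)
    finally show ?thesis using B2Z by simp
  qed
  moreover have "mtrace (\<Sigma> * Y * \<Sigma> * X) = T1"
    using XY dims Xc Yc mtrace_mult_comm_dim[of "\<Sigma> * X" "\<Sigma> * Y"] by (simp add: assoc_mult_mat_dim carrier_matD)
  moreover have "mtrace (\<Sigma> * Y * \<Sigma> * Y) = T1"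
  proof -
    have "mtrace (\<Sigma> * Y * \<Sigma> * Y) = mtrace (\<Sigma>2 * Z * \<Sigma>2 * Z)"
      unfolding Y_def \<Sigma>2_def using dims carrier_matD[OF Zc]
        mtrace_mult_comm_dim[of "\<Sigma> * transpose_mat E * Z * E * \<Sigma> * transpose_mat E * Z" E]
      by (simp add: assoc_mult_mat_dim)
    also have "\<dots> = mtrace (B2 * Z)"
      unfolding Z_def by (rule mtrace_sandwich_mat_inv[OF \<Sigma>2c d2' B2c Zc[unfolded Z_def]])
    finally show ?thesis using B2Z by simp
  qed
  ultimately have "T1 \<le> T0" using mtrace_sandwich_cross_le[OF \<Sigma> Xc Xs Yc Ys] by linarith
  thus ?thesis unfolding T0_def T1_def \<Sigma>2_def B2_def .
qed

section \<open>Coordinates\<close>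

lemma set_veh_list: "(i,j) \<in> set (veh_list m) \<longleftrightarrow> j \<le> i \<and> i < m"
  unfolding veh_list_def by (auto intro!: bexI[where x = j] rev_image_eqI[where x = i])

lemma distinct_veh_list: "distinct (veh_list m)"
  unfolding veh_list_def
proof (rule distinct_concat)
  show "distinct (map (\<lambda>j. map (\<lambda>i. (i, j)) [j..<m]) [0..<m])"
    unfolding distinct_map
  proof (intro conjI)
    show "inj_on (\<lambda>j. map (\<lambda>i. (i, j)) [j..<m]) (set [0..<m])"
    proof (rule inj_onI)
      fix j j' assume j: "j \<in> set [0..<m]" and j': "j' \<in> set [0..<m]"
        and eq: "map (\<lambda>i. (i, j)) [j..<m] = map (\<lambda>i. (i, j')) [j'..<m]"
      have "(j, j) \<in> set (map (\<lambda>i. (i, j)) [j..<m])" using j by auto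
      hence "(j, j) \<in> set (map (\<lambda>i. (i, j')) [j'..<m])" using eq by simp
      thus "j = j'" by auto
    qed
  qed simp
  show "\<And>ys. ys \<in> set (map (\<lambda>j. map (\<lambda>i. (i, j)) [j..<m]) [0..<m]) \<Longrightarrow> distinct ys"
    by (auto simp: distinct_map inj_on_def)
  show "\<And>ys zs. ys \<in> set (map (\<lambda>j. map (\<lambda>i. (i, j)) [j..<m]) [0..<m]) \<Longrightarrow>
      zs \<in> set (map (\<lambda>j. map (\<lambda>i. (i, j)) [j..<m]) [0..<m]) \<Longrightarrow> ys \<noteq> zs \<Longrightarrow>
      set ys \<inter> set zs = {}"
    by auto
qed

lemma length_veh_list: "length (veh_list m) = m * (m + 1) div 2"
proof -
  have "length (veh_list m) = (\<Sum>j<m. m - j)"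
    unfolding veh_list_def by (simp add: length_concat comp_def sum_list_sum_nth atLeast0LessThan)
  also have "\<dots> = (\<Sum>j\<in>{1..m}. j)"
    by (rule sum.reindex_bij_witness[of _ "\<lambda>j. m - j" "\<lambda>j. m - j"]) auto
  also have "\<dots> = m * (m + 1) div 2" using gauss_sum_from_Suc_0[of m, where 'a=nat] by simp
  finally show ?thesis .
qed

definition veh_index :: "nat \<Rightarrow> nat \<Rightarrow> nat \<Rightarrow> nat" where
  "veh_index m a b = (THE k. k < length (veh_list m) \<and> veh_list m ! k = (max a b, min a b))"

lemma the_index_distinct:
  assumes "distinct xs" "k < length xs"
  shows "(THE k'. k' < length xs \<and> xs ! k' = xs ! k) = k"
  using assms by (auto intro!: the_equality simp: nth_eq_iff_index_eq)

lemma veh_index: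
  assumes "a < m" "b < m"
  shows "veh_index m a b < length (veh_list m)" "veh_list m ! veh_index m a b = (max a b, min a b)"
proof -
  have "(max a b, min a b) \<in> set (veh_list m)" using assms by (auto simp: set_veh_list)
  then obtain k where k: "k < length (veh_list m)" "veh_list m ! k = (max a b, min a b)"
    by (auto simp: in_set_conv_nth)
  have "veh_index m a b = k"
    unfolding veh_index_def k(2)[symmetric] by (rule the_index_distinct[OF distinct_veh_list k(1)])
  thus "veh_index m a b < length (veh_list m)" "veh_list m ! veh_index m a b = (max a b, min a b)"
    using k by auto
qed

lemma veh_index_nth:
  assumes "k < length (veh_list m)" and "veh_list m ! k = (a,b)"
  shows "veh_index m a b = k"
proof -
  have "(a,b) \<in> set (veh_list m)" using assms by (metis nth_mem)
  hence "b \<le> a" by (simp add: set_veh_list)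
  hence "(max a b, min a b) = veh_list m ! k" using assms by simp
  thus ?thesis unfolding veh_index_def by (simp add: the_index_distinct[OF distinct_veh_list assms(1)])
qed

lemma index_mat_of_veh: "a < m \<Longrightarrow> b < m \<Longrightarrow> mat_of_veh m x $$ (a,b) = x (veh_index m a b)"
  unfolding mat_of_veh_def veh_index_def by simp

lemma dim_mat_of_veh[simp]: "dim_row (mat_of_veh m x) = m" "dim_col (mat_of_veh m x) = m"
  unfolding mat_of_veh_def by simp_all

lemma mat_of_veh_carrier[simp]: "mat_of_veh m x \<in> carrier_mat m m"
  unfolding mat_of_veh_def by simp

lemma transpose_mat_of_veh: "transpose_mat (mat_of_veh m x) = mat_of_veh m x"
  unfolding mat_of_veh_def by (auto intro!: eq_matI simp: max.commute min.commute)

lemma mat_of_veh_update: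
  "mat_of_veh m (z(i := z i + s)) = mat_of_veh m z + s \<cdot>\<^sub>m mat_of_veh m (\<lambda>k. if k = i then 1 else 0)"
  by (auto intro!: eq_matI simp: index_mat_of_veh)

lemma mat_of_veh_veh:
  assumes R: "R \<in> carrier_mat m m" and sym: "transpose_mat R = R"
  shows "mat_of_veh m (veh m R) = R"
proof (rule eq_matI)
  fix a b assume ab: "a < dim_row R" "b < dim_col R"
  hence ab': "a < m" "b < m" using R by auto
  have "mat_of_veh m (veh m R) $$ (a,b) = R $$ (max a b, min a b)"
    unfolding index_mat_of_veh[OF ab'] veh_def using veh_index(2)[OF ab'] by simp
  also have "\<dots> = R $$ (a,b)"
  proof (cases "b \<le> a")
    case True thus ?thesis by (simp add: max_def min_def)
  next
    case False
    hence "R $$ (max a b, min a b) = R $$ (b,a)" by (simp add: max_def min_def)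
    also have "\<dots> = transpose_mat R $$ (a,b)" using ab' R by simp
    finally show ?thesis using sym by simp
  qed
  finally show "mat_of_veh m (veh m R) $$ (a,b) = R $$ (a,b)" .
qed (use R in auto)

lemma mat_of_veh_lincomb:
  assumes v: "v \<in> carrier_vec (m * (m + 1) div 2)"
  shows "mat m m (\<lambda>(a,b). \<Sum>i<m * (m + 1) div 2.
      v $ i * mat_of_veh m (\<lambda>k. if k = i then 1 else 0) $$ (a,b)) = mat_of_veh m (\<lambda>k. v $ k)"
    (is "?L = ?R")
proof (rule eq_matI)
  fix a b assume "a < dim_row ?R" "b < dim_col ?R"
  hence ab: "a < m" "b < m" by auto
  have lt: "veh_index m a b < m * (m + 1) div 2" using veh_index(1)[OF ab] length_veh_list by simp
  show "?L $$ (a,b) = ?R $$ (a,b)"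
    using ab lt by (simp add: index_mat_of_veh if_distrib[of "\<lambda>x. _ * x"] cong: if_cong)
qed auto

lemma mat_of_veh_neq_0:
  assumes v: "v \<in> carrier_vec (m * (m + 1) div 2)" "v \<noteq> 0\<^sub>v (m * (m + 1) div 2)"
  shows "mat_of_veh m (\<lambda>k. v $ k) \<noteq> 0\<^sub>m m m"
proof -
  obtain i where i: "i < m * (m + 1) div 2" "v $ i \<noteq> 0" using v by (metis eq_vecI carrier_vecD index_zero_vec)
  obtain a b where p: "veh_list m ! i = (a,b)" by fastforce
  have il: "i < length (veh_list m)" using i length_veh_list by simp
  have "(a,b) \<in> set (veh_list m)" using p il by (metis nth_mem)
  hence ab: "a < m" "b < m" by (auto simp: set_veh_list)
  have "mat_of_veh m (\<lambda>k. v $ k) $$ (a,b) = v $ i" using veh_index_nth[OF il p] ab by (simp add: index_mat_of_veh)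
  thus ?thesis using i ab by auto
qed

lemma dim_mat_of_vecm[simp]: "dim_row (mat_of_vecm n1 n2 y) = n1" "dim_col (mat_of_vecm n1 n2 y) = n2"
  unfolding mat_of_vecm_def by simp_all

lemma mat_of_vecm_carrier[simp]: "mat_of_vecm n1 n2 y \<in> carrier_mat n1 n2"
  unfolding mat_of_vecm_def by simp

lemma index_mat_of_vecm: "a < n1 \<Longrightarrow> b < n2 \<Longrightarrow> mat_of_vecm n1 n2 y $$ (a,b) = y (a + n1 * b)"
  unfolding mat_of_vecm_def by simp

lemma mat_of_vecm_update:
  "mat_of_vecm n1 n2 (z(i := z i + s)) = mat_of_vecm n1 n2 z + s \<cdot>\<^sub>m mat_of_vecm n1 n2 (\<lambda>k. if k = i then 1 else 0)"
  by (auto intro!: eq_matI simp: index_mat_of_vecm)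

lemma mat_of_vecm_vecm:
  assumes N: "N \<in> carrier_mat n1 n2"
  shows "mat_of_vecm n1 n2 (vecm n1 N) = N"
  using N by (auto intro!: eq_matI simp: index_mat_of_vecm vecm_def)

lemma col_stack_index_less:
  fixes a b n1 n2 :: nat
  assumes "a < n1" "b < n2"
  shows "a + n1 * b < n1 * n2"
proof -
  have "a + n1 * b < n1 + n1 * b" using assms by simp
  also have "\<dots> = n1 * (b + 1)" by (simp add: algebra_simps)
  also have "\<dots> \<le> n1 * n2" using assms by (intro mult_le_mono2) simp
  finally show ?thesis .
qed

lemma mat_of_vecm_lincomb_index:
  assumes "a < n1" "b < n2"
  shows "(\<Sum>i<n1 * n2. (v $ i) * mat_of_vecm n1 n2 (\<lambda>k. if k = i then 1 else 0) $$ (a,b)) = v $ (a + n1 * b)"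
  using assms col_stack_index_less[OF assms] by (simp add: index_mat_of_vecm if_distrib[of "\<lambda>x. _ * x"] cong: if_cong)

lemma mat_of_vecm_neq_0:
  assumes v: "v \<in> carrier_vec (n1 * n2)" "v \<noteq> 0\<^sub>v (n1 * n2)"
  shows "mat_of_vecm n1 n2 (\<lambda>k. v $ k) \<noteq> 0\<^sub>m n1 n2"
proof -
  obtain i where i: "i < n1 * n2" "v $ i \<noteq> 0" using v by (metis eq_vecI carrier_vecD index_zero_vec)
  have n1: "n1 > 0" using i by (cases n1) auto
  have a: "i mod n1 < n1" using n1 by simp
  have b: "i div n1 < n2" using i by (simp add: less_mult_imp_div_less mult.commute)
  have "mat_of_vecm n1 n2 (\<lambda>k. v $ k) $$ (i mod n1, i div n1) = v $ i"
    using a b by (simp add: index_mat_of_vecm)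
  thus ?thesis using i a b by auto
qed

section \<open>Block structure of \<open>K\<close>\<close>

definition offdiag_mat :: "nat \<Rightarrow> nat \<Rightarrow> real mat \<Rightarrow> real mat" where
  "offdiag_mat n1 n2 V = four_block_mat (0\<^sub>m n1 n1) V (transpose_mat V) (0\<^sub>m n2 n2)"

lemma offdiag_mat_carrier[simp]: "offdiag_mat n1 n2 V \<in> carrier_mat (n1 + n2) (n1 + n2)"
  unfolding offdiag_mat_def by simp

lemma Kmat_carrier[simp]: "Kmat n1 n2 N \<in> carrier_mat (n1 + n2) (n1 + n2)"
  unfolding Kmat_def by simp

lemma Kmat_add_smult:
  assumes N: "N \<in> carrier_mat n1 n2" and N': "N' \<in> carrier_mat n1 n2"
  shows "Kmat n1 n2 (N + s \<cdot>\<^sub>m N') = Kmat n1 n2 N + s \<cdot>\<^sub>m offdiag_mat n1 n2 N'"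
  using N N' unfolding Kmat_def offdiag_mat_def by (auto intro!: eq_matI)

lemma transpose_offdiag_mat:
  assumes V: "V \<in> carrier_mat n1 n2"
  shows "transpose_mat (offdiag_mat n1 n2 V) = offdiag_mat n1 n2 V"
  using V unfolding offdiag_mat_def by (auto intro!: eq_matI)

lemma offdiag_mat_neq_0:
  assumes V: "V \<in> carrier_mat n1 n2" "V \<noteq> 0\<^sub>m n1 n2"
  shows "offdiag_mat n1 n2 V \<noteq> 0\<^sub>m (n1 + n2) (n1 + n2)"
proof -
  obtain a b where ab: "a < n1" "b < n2" "V $$ (a,b) \<noteq> 0" using V by (metis eq_matI carrier_matD index_zero_mat)
  have "offdiag_mat n1 n2 V $$ (a, n1 + b) = V $$ (a,b)" using ab V unfolding offdiag_mat_def by auto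
  thus ?thesis using ab by auto
qed

lemma offdiag_mat_lincomb:
  assumes v: "v \<in> carrier_vec (n1 * n2)"
  shows "mat (n1 + n2) (n1 + n2) (\<lambda>(a,b). \<Sum>i<n1 * n2.
      v $ i * offdiag_mat n1 n2 (mat_of_vecm n1 n2 (\<lambda>k. if k = i then 1 else 0)) $$ (a,b))
    = offdiag_mat n1 n2 (mat_of_vecm n1 n2 (\<lambda>k. v $ k))" (is "?L = ?R")
proof (rule eq_matI)
  fix a b assume "a < dim_row ?R" "b < dim_col ?R"
  hence ab: "a < n1 + n2" "b < n1 + n2" unfolding offdiag_mat_def by auto
  consider (upper) "a < n1" "\<not> b < n1" | (lower) "\<not> a < n1" "b < n1" | (diagonal) "a < n1 \<longleftrightarrow> b < n1"
    by linarith
  thus "?L $$ (a,b) = ?R $$ (a,b)"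
  proof cases
    case upper
    thus ?thesis using ab mat_of_vecm_lincomb_index[of a n1 "b - n1" n2 v]
      unfolding offdiag_mat_def by (simp add: index_mat_of_vecm)
  next
    case lower
    thus ?thesis using ab mat_of_vecm_lincomb_index[of b n1 "a - n1" n2 v]
      unfolding offdiag_mat_def by (simp add: index_mat_of_vecm)
  qed (use ab in \<open>auto simp: offdiag_mat_def\<close>)
qed (auto simp: offdiag_mat_def)

definition lower_selector :: "nat \<Rightarrow> nat \<Rightarrow> real mat" where
  "lower_selector n1 n2 = mat n2 (n1 + n2) (\<lambda>(i,j). if j = n1 + i then 1 else 0)"

lemma lower_selector_carrier[simp]: "lower_selector n1 n2 \<in> carrier_mat n2 (n1 + n2)"
  unfolding lower_selector_def by simp

lemma index_lower_selector_mult: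
  assumes A: "A \<in> carrier_mat (n1 + n2) q" and i: "i < n2" and j: "j < q"
  shows "(lower_selector n1 n2 * A) $$ (i,j) = A $$ (n1 + i, j)"
proof -
  have "(lower_selector n1 n2 * A) $$ (i,j) = (\<Sum>c<n1 + n2. (if c = n1 + i then 1 else 0) * A $$ (c, j))"
    using A i j unfolding lower_selector_def
    by (auto simp: scalar_prod_def row_def col_def atLeast0LessThan intro!: sum.cong)
  also have "\<dots> = A $$ (n1 + i, j)" using i by (simp add: if_distrib[of "\<lambda>x. x * _"] cong: if_cong)
  finally show ?thesis .
qed

lemma lower_selector_append_rows:
  assumes H1: "H1 \<in> carrier_mat n1 m" and H2: "H2 \<in> carrier_mat n2 m"
  shows "lower_selector n1 n2 * (H1 @\<^sub>r H2) = H2"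
proof (rule eq_matI)
  fix i j assume ij: "i < dim_row H2" "j < dim_col H2"
  have C: "H1 @\<^sub>r H2 \<in> carrier_mat (n1 + n2) m" using H1 H2 by auto
  show "(lower_selector n1 n2 * (H1 @\<^sub>r H2)) $$ (i,j) = H2 $$ (i,j)"
    using index_lower_selector_mult[OF C, of i j] ij H1 H2 unfolding append_rows_def by auto
qed (use H2 carrier_append_rows[OF H1 H2] in \<open>auto simp: lower_selector_def\<close>)

lemma lower_selector_Kmat:
  "lower_selector n1 n2 * Kmat n1 n2 N * transpose_mat (lower_selector n1 n2) = 1\<^sub>m n2"
  (is "?E * ?K * transpose_mat ?E = _")
proof (rule eq_matI)
  fix i j assume ij: "i < dim_row (1\<^sub>m n2 :: real mat)" "j < dim_col (1\<^sub>m n2 :: real mat)"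
  have C: "?E * ?K \<in> carrier_mat n2 (n1 + n2)" using mult_carrier_mat[OF lower_selector_carrier Kmat_carrier] .
  have "(?E * ?K * transpose_mat ?E) $$ (i,j) = (\<Sum>c<n1 + n2. (?E * ?K) $$ (i,c) * (if c = n1 + j then 1 else 0))"
    using ij C unfolding lower_selector_def
    by (auto simp: scalar_prod_def row_def col_def atLeast0LessThan intro!: sum.cong)
  also have "\<dots> = (?E * ?K) $$ (i, n1 + j)" using ij by (simp add: if_distrib[of "\<lambda>x. _ * x"] cong: if_cong)
  also have "\<dots> = ?K $$ (n1 + i, n1 + j)" using ij index_lower_selector_mult[OF Kmat_carrier, where i=i and j="n1 + j"] by auto
  also have "\<dots> = 1\<^sub>m n2 $$ (i,j)" using ij unfolding Kmat_def by auto
  finally show "(?E * ?K * transpose_mat ?E) $$ (i,j) = 1\<^sub>m n2 $$ (i,j)" .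
qed (auto simp: lower_selector_def)

section \<open>The two partial Hessians\<close>

lemma ln_det_one_add_mat_inv_mult:
  fixes K C :: "real mat"
  assumes K: "K \<in> carrier_mat n n" and C: "C \<in> carrier_mat n n"
    and dK: "det K > 0" and dKC: "det (K + C) > 0"
  shows "ln (det (1\<^sub>m n + mat_inv K * C)) = ln (det (K + C)) - ln (det K)"
proof -
  have iK: "mat_inv K \<in> carrier_mat n n" using K by simp
  have "mat_inv K * (K + C) = 1\<^sub>m n + mat_inv K * C"
    using mult_add_distrib_mat[OF iK K C] mat_inv_left[OF K] dK by simp
  hence "det (1\<^sub>m n + mat_inv K * C) = det (mat_inv K) * det (K + C)"
    using iK K C by (metis det_mult add_carrier_mat)
  also have "\<dots> = det (K + C) / det K" using det_mat_inv[OF K] dK by simp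
  finally show ?thesis using dK dKC by (simp add: ln_div)
qed

lemma f_obj_eq:
  fixes H1 H2 R K :: "real mat"
  assumes H1: "H1 \<in> carrier_mat n1 m" and H2: "H2 \<in> carrier_mat n2 m"
    and R: "R \<in> carrier_mat m m" and K: "K \<in> carrier_mat (n1 + n2) (n1 + n2)"
    and dK: "det K > 0" and dKC: "det (K + (H1 @\<^sub>r H2) * R * transpose_mat (H1 @\<^sub>r H2)) > 0"
  shows "f_obj H1 H2 R K = ln (det (K + (H1 @\<^sub>r H2) * R * transpose_mat (H1 @\<^sub>r H2))) - ln (det K)
      - ln (det (1\<^sub>m m + transpose_mat H2 * H2 * R))"
proof -
  let ?H = "H1 @\<^sub>r H2"
  have H: "?H \<in> carrier_mat (n1 + n2) m" using H1 H2 by auto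
  have "minv K * ?H * R * transpose_mat ?H = mat_inv K * (?H * R * transpose_mat ?H)"
    using H R K dK minv_eq_mat_inv[OF K] by (simp add: assoc_mult_mat_dim carrier_matD)
  thus ?thesis
    unfolding f_obj_def Let_def using H R K dK dKC
    by (simp add: ln_det_one_add_mat_inv_mult[of K "n1 + n2"] carrier_matD)
qed

locale barrier_point =
  fixes n1 n2 m :: nat and H1 H2 R N :: "real mat"
  assumes H1: "H1 \<in> carrier_mat n1 m" and H2: "H2 \<in> carrier_mat n2 m"
    and R: "pos_def m R" and N: "N \<in> carrier_mat n1 n2"
    and K: "pos_def (n1 + n2) (Kmat n1 n2 N)"
begin

definition H :: "real mat" where "H = H1 @\<^sub>r H2"

definition C :: "real mat" where "C = H * R * transpose_mat H"

definition W2 :: "real mat" where "W2 = transpose_mat H2 * H2"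

lemma H_carrier: "H \<in> carrier_mat (n1 + n2) m"
  unfolding H_def using H1 H2 by auto

lemma R_carrier: "R \<in> carrier_mat m m"
  using R by (rule pos_def_carrier)

lemma C_carrier: "C \<in> carrier_mat (n1 + n2) (n1 + n2)"
  unfolding C_def using H_carrier R_carrier by auto

lemma W2_carrier: "W2 \<in> carrier_mat m m"
  unfolding W2_def using H2 by auto

lemma Sigma_pos_def: "pos_def (n1 + n2) (Kmat n1 n2 N + C)"
  unfolding C_def by (rule pos_def_add_sandwich[OF K R H_carrier])

lemma f_obj_eq_at_R:
  assumes "K' \<in> carrier_mat (n1 + n2) (n1 + n2)" "det K' > 0" "det (K' + C) > 0"
  shows "f_obj H1 H2 R K' = ln (det (K' + C)) - ln (det K') - ln (det (1\<^sub>m m + W2 * R))"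
  using f_obj_eq[OF H1 H2 R_carrier assms(1,2)] assms(3) unfolding C_def H_def W2_def by simp

definition My :: "nat \<Rightarrow> (nat \<Rightarrow> real) \<Rightarrow> real mat" where
  "My k y = (if k = 0 then Kmat n1 n2 (mat_of_vecm n1 n2 y) + C else Kmat n1 n2 (mat_of_vecm n1 n2 y))"

definition Dy :: "nat \<Rightarrow> nat \<Rightarrow> real mat" where
  "Dy k i = offdiag_mat n1 n2 (mat_of_vecm n1 n2 (\<lambda>l. if l = i then 1 else 0))"

lemma My_affine: "My k (z(i := z i + s)) = My k z + s \<cdot>\<^sub>m Dy k i"
proof -
  have K: "Kmat n1 n2 (mat_of_vecm n1 n2 (z(i := z i + s))) = Kmat n1 n2 (mat_of_vecm n1 n2 z) + s \<cdot>\<^sub>m Dy k i"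
    unfolding Dy_def mat_of_vecm_update by (rule Kmat_add_smult) auto
  have Kc: "Kmat n1 n2 (mat_of_vecm n1 n2 z) \<in> carrier_mat (n1 + n2) (n1 + n2)"
    and Dc: "s \<cdot>\<^sub>m Dy k i \<in> carrier_mat (n1 + n2) (n1 + n2)" by (simp_all add: Dy_def)
  have "Kmat n1 n2 (mat_of_vecm n1 n2 z) + s \<cdot>\<^sub>m Dy k i + C = Kmat n1 n2 (mat_of_vecm n1 n2 z) + C + s \<cdot>\<^sub>m Dy k i"
    using assoc_add_mat[OF Kc Dc C_carrier] assoc_add_mat[OF Kc C_carrier Dc] comm_add_mat[OF Dc C_carrier]
    by simp
  thus ?thesis unfolding My_def K by (simp add: Dy_def)
qed

lemma y_ln_det_sum:
  "ln_det_sum {0, 1} (\<lambda>_. n1 + n2) My Dy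
     (- ln (det (1\<^sub>m m + W2 * R)) + ln (det R) / t + ln (PT - mtrace R) / t
       + (\<Sum>j\<in>{1..J}. ln (PI j - mtrace (W3 j * R)) / t))
     (\<lambda>k. if k = 0 then 1 else - (1 + 1 / t))
     (\<lambda>y. f_bar H1 H2 J W3 PT PI t R (Kmat n1 n2 (mat_of_vecm n1 n2 y)))"
proof
  fix z assume "\<forall>k\<in>{0, 1}. det (My k z) > 0"
  hence "det (Kmat n1 n2 (mat_of_vecm n1 n2 z) + C) > 0" "det (Kmat n1 n2 (mat_of_vecm n1 n2 z)) > 0"
    unfolding My_def by auto
  hence "f_obj H1 H2 R (Kmat n1 n2 (mat_of_vecm n1 n2 z)) = ln (det (Kmat n1 n2 (mat_of_vecm n1 n2 z) + C))
      - ln (det (Kmat n1 n2 (mat_of_vecm n1 n2 z))) - ln (det (1\<^sub>m m + W2 * R))"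
    by (simp add: f_obj_eq_at_R)
  thus "f_bar H1 H2 J W3 PT PI t R (Kmat n1 n2 (mat_of_vecm n1 n2 z)) =
    - ln (det (1\<^sub>m m + W2 * R)) + ln (det R) / t + ln (PT - mtrace R) / t
       + (\<Sum>j\<in>{1..J}. ln (PI j - mtrace (W3 j * R)) / t) +
    (\<Sum>k\<in>{0, 1}. (if k = 0 then 1 else - (1 + 1 / t)) * ln (det (My k z)))"
    unfolding f_bar_def My_def by (simp add: algebra_simps)
qed (use C_carrier My_affine in \<open>auto simp: My_def Dy_def\<close>)

theorem y_hessian_nonsingular:
  assumes t: "t > 0"
  shows "det (hessian (\<lambda>y. f_bar H1 H2 J W3 PT PI t R (Kmat n1 n2 (mat_of_vecm n1 n2 y)))
            (n1 * n2) (vecm n1 N)) \<noteq> 0"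
proof -
  interpret Y: ln_det_sum "{0, 1}" "\<lambda>_. n1 + n2" My Dy
     "- ln (det (1\<^sub>m m + W2 * R)) + ln (det R) / t + ln (PT - mtrace R) / t
       + (\<Sum>j\<in>{1..J}. ln (PI j - mtrace (W3 j * R)) / t)"
     "\<lambda>k. if k = 0 then 1 else - (1 + 1 / t)"
     "\<lambda>y. f_bar H1 H2 J W3 PT PI t R (Kmat n1 n2 (mat_of_vecm n1 n2 y))"
    by (rule y_ln_det_sum)
  let ?K = "Kmat n1 n2 N"
  let ?g = "\<lambda>y. f_bar H1 H2 J W3 PT PI t R (Kmat n1 n2 (mat_of_vecm n1 n2 y))"
  have at_N: "My 0 (vecm n1 N) = ?K + C" "My 1 (vecm n1 N) = ?K"
    unfolding My_def mat_of_vecm_vecm[OF N] by simp_all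
  have pos: "\<forall>k\<in>{0, 1}. det (My k (vecm n1 N)) > 0"
    using at_N pos_def_det_pos[OF Sigma_pos_def] pos_def_det_pos[OF K] by auto
  show ?thesis
  proof (rule det_neq_0_if_quad_form_neq_0)
    fix v :: "real vec" assume v: "v \<in> carrier_vec (n1 * n2)" "v \<noteq> 0\<^sub>v (n1 * n2)"
    define F where "F = offdiag_mat n1 n2 (mat_of_vecm n1 n2 (\<lambda>k. v $ k))"
    have Fs: "transpose_mat F = F" unfolding F_def by (rule transpose_offdiag_mat) simp
    have Fnz: "F \<noteq> 0\<^sub>m (n1 + n2) (n1 + n2)"
      unfolding F_def by (rule offdiag_mat_neq_0) (use mat_of_vecm_neq_0[OF v] in auto)
    define Ta where "Ta = mtrace (mat_inv (?K + C) * F * mat_inv (?K + C) * F)"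
    define Tb where "Tb = mtrace (mat_inv ?K * F * mat_inv ?K * F)"
    have "mat (n1 + n2) (n1 + n2) (\<lambda>(a,b). \<Sum>i<n1 * n2. v $ i * Dy k i $$ (a,b)) = F" for k
      unfolding Dy_def F_def by (rule offdiag_mat_lincomb[OF v(1)])
    hence "v \<bullet> (hessian ?g (n1 * n2) (vecm n1 N) *\<^sub>v v) = (Tb - Ta) + Tb / t"
      using Y.hessian_quadratic_form[OF pos v(1)] at_N unfolding Ta_def Tb_def by (simp add: algebra_simps)
    moreover have "Ta \<le> Tb"
      unfolding Ta_def Tb_def C_def by (rule mtrace_inv_sandwich_antimono[OF K R H_carrier _ Fs]) (simp add: F_def)
    moreover have "Tb > 0"
      unfolding Tb_def using Fs Fnz by (intro mtrace_sandwich_pos[OF pos_def_mat_inv[OF K]]) (auto simp: F_def)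
    hence "Tb / t > 0" using t by simp
    ultimately show "v \<bullet> (hessian ?g (n1 * n2) (vecm n1 N) *\<^sub>v v) \<noteq> 0" by linarith
  qed (simp add: hessian_def)
qed

end

context barrier_point
begin

lemma det_one_add_W2_R_pos: "det (1\<^sub>m m + W2 * R) > 0"
proof -
  have Ri: "pos_def m (mat_inv R)" by (rule pos_def_mat_inv[OF R])
  have W2: "pos_semidef m W2"
    using pos_semidef_congruence[OF pos_def_imp_pos_semidef[OF pos_def_one] H2] H2
    unfolding W2_def by simp
  have Ric: "mat_inv R \<in> carrier_mat m m" using R_carrier by simp
  have "1\<^sub>m m + W2 * R = (mat_inv R + W2) * R"
    using add_mult_distrib_mat[OF Ric W2_carrier R_carrier] mat_inv_left[OF R_carrier pos_def_det_neq_0[OF R]]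
    by simp
  hence "det (1\<^sub>m m + W2 * R) = det (mat_inv R + W2) * det R"
    using Ric W2_carrier R_carrier by (simp add: det_mult[of _ m])
  thus ?thesis
    using pos_def_det_pos[OF pos_def_add_pos_semidef[OF Ri W2]] pos_def_det_pos[OF R] by simp
qed

lemma mat_inv_one_add_W2_R_push_through:
  "mat_inv (1\<^sub>m m + W2 * R) * transpose_mat H2 = transpose_mat H2 * mat_inv (1\<^sub>m n2 + H2 * R * transpose_mat H2)"
proof -
  let ?A = "1\<^sub>m m + W2 * R" and ?\<Sigma>2 = "1\<^sub>m n2 + H2 * R * transpose_mat H2"
  have Ac: "?A \<in> carrier_mat m m" using W2_carrier R_carrier by auto
  have \<Sigma>2: "pos_def n2 ?\<Sigma>2" by (rule pos_def_add_sandwich[OF pos_def_one R H2])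
  have \<Sigma>2c: "?\<Sigma>2 \<in> carrier_mat n2 n2" and d\<Sigma>2: "det ?\<Sigma>2 \<noteq> 0"
    using \<Sigma>2 by (auto simp: pos_def_carrier pos_def_det_neq_0)
  have dA: "det ?A \<noteq> 0" using det_one_add_W2_R_pos by simp
  note dims = carrier_matD[OF H2] carrier_matD[OF R_carrier] carrier_matD[OF W2_carrier]
  have swap: "transpose_mat H2 * ?\<Sigma>2 = ?A * transpose_mat H2"
    unfolding W2_def using dims by (simp add: mult_add_distrib_dim add_mult_distrib_dim assoc_mult_mat_dim)
  have "mat_inv ?A * transpose_mat H2 = mat_inv ?A * (transpose_mat H2 * (?\<Sigma>2 * mat_inv ?\<Sigma>2))"
    using mat_inv_right[OF \<Sigma>2c d\<Sigma>2] H2 by simp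
  also have "\<dots> = mat_inv ?A * (?A * (transpose_mat H2 * mat_inv ?\<Sigma>2))"
    using swap dims by (simp add: assoc_mult_mat_dim[symmetric])
  also have "\<dots> = transpose_mat H2 * mat_inv ?\<Sigma>2"
    using mat_inv_cancel_left'[OF Ac dA] dims by simp
  finally show ?thesis .
qed

lemma mtrace_W2_sandwich_eq:
  assumes V: "V \<in> carrier_mat m m"
  shows "mtrace (mat_inv (1\<^sub>m m + W2 * R) * (W2 * V) * mat_inv (1\<^sub>m m + W2 * R) * (W2 * V)) =
    mtrace (mat_inv (1\<^sub>m n2 + H2 * R * transpose_mat H2) * (H2 * V * transpose_mat H2) *
            mat_inv (1\<^sub>m n2 + H2 * R * transpose_mat H2) * (H2 * V * transpose_mat H2))"
proof -
  define Y1 where "Y1 = mat_inv (1\<^sub>m m + W2 * R)"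
  define S2 where "S2 = mat_inv (1\<^sub>m n2 + H2 * R * transpose_mat H2)"
  have Y1c: "Y1 \<in> carrier_mat m m" and S2c: "S2 \<in> carrier_mat n2 n2"
    unfolding Y1_def S2_def using W2_carrier R_carrier H2 by simp_all
  note dims = carrier_matD[OF H2] carrier_matD[OF V] carrier_matD[OF Y1c] carrier_matD[OF S2c]
  have push: "Y1 * (transpose_mat H2 * Z) = transpose_mat H2 * (S2 * Z)" if "dim_row Z = n2" for Z
  proof -
    have "Y1 * (transpose_mat H2 * Z) = (Y1 * transpose_mat H2) * Z"
      using dims that by (simp add: assoc_mult_mat_dim)
    also have "\<dots> = transpose_mat H2 * (S2 * Z)"
      unfolding Y1_def S2_def mat_inv_one_add_W2_R_push_through using dims that
      by (simp add: assoc_mult_mat_dim)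
    finally show ?thesis .
  qed
  have "mtrace (Y1 * (W2 * V) * Y1 * (W2 * V))
      = mtrace (transpose_mat H2 * (S2 * (H2 * (V * (transpose_mat H2 * (S2 * (H2 * V)))))))"
    unfolding W2_def using dims by (simp add: assoc_mult_mat_dim push)
  also have "\<dots> = mtrace (S2 * (H2 * V * transpose_mat H2) * S2 * (H2 * V * transpose_mat H2))"
    using dims mtrace_mult_comm_dim[of "transpose_mat H2" "S2 * (H2 * (V * (transpose_mat H2 * (S2 * (H2 * V)))))"]
    by (simp add: assoc_mult_mat_dim)
  finally show ?thesis unfolding Y1_def S2_def .
qed

lemma lower_selector_sandwich:
  assumes X: "X \<in> carrier_mat m m"
  shows "lower_selector n1 n2 * (H * X * transpose_mat H) * transpose_mat (lower_selector n1 n2) =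
    H2 * X * transpose_mat H2"
proof -
  let ?E = "lower_selector n1 n2"
  have EH: "?E * H = H2" unfolding H_def by (rule lower_selector_append_rows[OF H1 H2])
  note dims = carrier_matD[OF H_carrier] carrier_matD[OF X] carrier_matD[OF lower_selector_carrier[of n1 n2]]
  have "transpose_mat H * transpose_mat ?E = transpose_mat H2"
    using EH transpose_mult_dim[of ?E H] dims by simp
  moreover have "?E * (H * X * transpose_mat H) * transpose_mat ?E = (?E * H) * X * (transpose_mat H * transpose_mat ?E)"
    using dims by (simp add: assoc_mult_mat_dim)
  ultimately show ?thesis unfolding EH by simp
qed

text \<open>The term \<open>ln (det (1 + W\<^sub>2 R))\<close> of \<open>f\<close> only sees the compression of \<open>K + H R H\<^sup>T\<close> to the
  \<open>H\<^sub>2\<close>-block, on which \<open>K\<close> is the identity; so its second derivative is dominated by that of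
  \<open>ln (det (K + H R H\<^sup>T))\<close>.\<close>

lemma mtrace_W2_sandwich_le:
  assumes V: "V \<in> carrier_mat m m" "transpose_mat V = V"
  shows "mtrace (mat_inv (1\<^sub>m m + W2 * R) * (W2 * V) * mat_inv (1\<^sub>m m + W2 * R) * (W2 * V))
    \<le> mtrace (mat_inv (Kmat n1 n2 N + C) * (H * V * transpose_mat H) *
              mat_inv (Kmat n1 n2 N + C) * (H * V * transpose_mat H))"
proof -
  let ?E = "lower_selector n1 n2" and ?B = "H * V * transpose_mat H"
  note dims = carrier_matD[OF H_carrier] carrier_matD[OF V(1)] carrier_matD[OF C_carrier]
    carrier_matD[OF lower_selector_carrier[of n1 n2]] carrier_matD[OF Kmat_carrier[of n1 n2 N]]
  have E\<Sigma>: "?E * (Kmat n1 n2 N + C) * transpose_mat ?E = 1\<^sub>m n2 + H2 * R * transpose_mat H2"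
    using lower_selector_Kmat[of n1 n2 N] lower_selector_sandwich[OF R_carrier] dims
    by (simp add: C_def mult_add_distrib_dim add_mult_distrib_dim)
  have B: "?B \<in> carrier_mat (n1 + n2) (n1 + n2)" using H_carrier V by auto
  have Bs: "transpose_mat ?B = ?B" using dims V(2) by (simp add: transpose_mult_dim assoc_mult_mat_dim)
  have "det (1\<^sub>m n2 + H2 * R * transpose_mat H2) \<noteq> 0"
    using pos_def_det_neq_0[OF pos_def_add_sandwich[OF pos_def_one R H2]] .
  thus ?thesis
    using mtrace_inv_sandwich_compress[OF Sigma_pos_def lower_selector_carrier B Bs]
    unfolding mtrace_W2_sandwich_eq[OF V(1)] E\<Sigma> lower_selector_sandwich[OF V(1)] by simp
qed

end

lemma sum_split_first_four:
  fixes F :: "nat \<Rightarrow> real"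
  shows "(\<Sum>k\<in>{0..J+3}. F k) = F 0 + F 1 + F 2 + F 3 + (\<Sum>j\<in>{1..J}. F (j + 3))"
proof -
  have "{0..J+3} = {0,1,2,3} \<union> {4..J+3}" by auto
  hence "(\<Sum>k\<in>{0..J+3}. F k) = (\<Sum>k\<in>{0,1,2,3}. F k) + (\<Sum>k\<in>{4..J+3}. F k)"
    by (simp add: sum.union_disjoint)
  also have "(\<Sum>k\<in>{4..J+3}. F k) = (\<Sum>j\<in>{1..J}. F (j + 3))"
    using sum.shift_bounds_cl_nat_ivl[of F 1 3 J] by simp
  finally show ?thesis by simp
qed

text \<open>Indices \<open>0, 1, 2\<close> stand for \<open>ln (det (K + H R H\<^sup>T))\<close>, \<open>ln (det (1 + W\<^sub>2 R))\<close> and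
  \<open>ln (det R)\<close>, index \<open>3\<close> and \<open>j + 3\<close> for the power constraints, written as determinants of
  \<open>1 \<times> 1\<close> matrices.\<close>

locale barrier_point_constraints = barrier_point +
  fixes J :: nat and W3 :: "nat \<Rightarrow> real mat" and PT t :: real and PI :: "nat \<Rightarrow> real"
  assumes W3: "\<forall>j\<in>{1..J}. W3 j \<in> carrier_mat m m" and t: "t > 0"
    and trace_R: "mtrace R < PT" and trace_W3_R: "\<forall>j\<in>{1..J}. mtrace (W3 j * R) < PI j"
begin

definition dimx :: "nat \<Rightarrow> nat" where
  "dimx k = (if k = 0 then n1 + n2 else if k \<le> 2 then m else 1)"

definition Mx :: "nat \<Rightarrow> (nat \<Rightarrow> real) \<Rightarrow> real mat" where
  "Mx k x = (if k = 0 then Kmat n1 n2 N + H * mat_of_veh m x * transpose_mat H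
     else if k = 1 then 1\<^sub>m m + W2 * mat_of_veh m x else if k = 2 then mat_of_veh m x
     else if k = 3 then mat 1 1 (\<lambda>_. PT - mtrace (mat_of_veh m x))
     else mat 1 1 (\<lambda>_. PI (k - 3) - mtrace (W3 (k - 3) * mat_of_veh m x)))"

definition Ex :: "nat \<Rightarrow> real mat" where
  "Ex i = mat_of_veh m (\<lambda>l. if l = i then 1 else 0)"

definition Dx :: "nat \<Rightarrow> nat \<Rightarrow> real mat" where
  "Dx k i = (if k = 0 then H * Ex i * transpose_mat H
     else if k = 1 then W2 * Ex i else if k = 2 then Ex i
     else if k = 3 then mat 1 1 (\<lambda>_. - mtrace (Ex i))
     else mat 1 1 (\<lambda>_. - mtrace (W3 (k - 3) * Ex i)))"

lemma W3_carrier: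
  assumes "k \<in> {0..J+3}" "k > 3"
  shows "W3 (k - 3) \<in> carrier_mat m m"
proof -
  have "k - 3 \<in> {1..J}" using assms by auto
  thus ?thesis using W3 by blast
qed

lemma Mx_carrier: "k \<in> {0..J+3} \<Longrightarrow> Mx k x \<in> carrier_mat (dimx k) (dimx k)"
  unfolding Mx_def dimx_def using H_carrier W2_carrier by auto

lemma Dx_carrier: "k \<in> {0..J+3} \<Longrightarrow> Dx k i \<in> carrier_mat (dimx k) (dimx k)"
  unfolding Dx_def dimx_def Ex_def using H_carrier W2_carrier by auto

lemma Mx_affine:
  assumes k: "k \<in> {0..J+3}"
  shows "Mx k (z(i := z i + s)) = Mx k z + s \<cdot>\<^sub>m Dx k i"
proof -
  let ?A = "mat_of_veh m z"
  have upd: "mat_of_veh m (z(i := z i + s)) = ?A + s \<cdot>\<^sub>m Ex i"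
    unfolding Ex_def by (rule mat_of_veh_update)
  have Ec: "Ex i \<in> carrier_mat m m" unfolding Ex_def by simp
  note dims = carrier_matD[OF H_carrier] carrier_matD[OF W2_carrier] carrier_matD[OF Ec]
    carrier_matD[OF Kmat_carrier[of n1 n2 N]]
  have tr: "mtrace (W * (?A + s \<cdot>\<^sub>m Ex i)) = mtrace (W * ?A) + s * mtrace (W * Ex i)"
    if W: "W \<in> carrier_mat m m" for W
    using W Ec mult_add_distrib_mat[OF W _ smult_carrier_mat[OF Ec]]
    by (simp add: mtrace_add[of _ m] mtrace_smult[of _ m] mult_smult_distrib[OF W Ec])
  consider "k = 0" | "k = 1" | "k = 2" | "k = 3" | "k > 3" by linarith
  thus ?thesis
  proof cases
    case 1
    have "Kmat n1 n2 N + H * (?A + s \<cdot>\<^sub>m Ex i) * transpose_mat H =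
          Kmat n1 n2 N + H * ?A * transpose_mat H + s \<cdot>\<^sub>m (H * Ex i * transpose_mat H)"
      using dims by (simp add: mult_add_distrib_dim add_mult_distrib_dim mult_smult_distrib_dim
          mult_smult_assoc_dim assoc_add_dim)
    thus ?thesis unfolding Mx_def Dx_def upd using 1 by simp
  next
    case 2
    have "1\<^sub>m m + W2 * (?A + s \<cdot>\<^sub>m Ex i) = 1\<^sub>m m + W2 * ?A + s \<cdot>\<^sub>m (W2 * Ex i)"
      using dims by (simp add: mult_add_distrib_dim mult_smult_distrib_dim assoc_add_dim)
    thus ?thesis unfolding Mx_def Dx_def upd using 2 by simp
  next
    case 3
    thus ?thesis unfolding Mx_def Dx_def upd by simp
  next
    case 4
    thus ?thesis unfolding Mx_def Dx_def upd using tr[OF one_carrier_mat] Ec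
      by (auto intro!: eq_matI)
  next
    case 5
    thus ?thesis unfolding Mx_def Dx_def upd using tr[OF W3_carrier[OF k]]
      by (auto intro!: eq_matI)
  qed
qed

lemma det_mat_1: "det (mat (Suc 0) (Suc 0) f) = f (0, 0)"
  by (subst det_single) auto

lemma x_ln_det_sum:
  "ln_det_sum {0..J+3} dimx Mx Dx (- ln (det (Kmat n1 n2 N)) - ln (det (Kmat n1 n2 N)) / t)
     (\<lambda>k. if k = 0 then 1 else if k = 1 then -1 else 1 / t)
     (\<lambda>x. f_bar H1 H2 J W3 PT PI t (mat_of_veh m x) (Kmat n1 n2 N))"
proof (unfold_locales; (intro Mx_carrier Dx_carrier Mx_affine)?)
  fix z assume pos: "\<forall>k\<in>{0..J+3}. det (Mx k z) > 0"
  let ?A = "mat_of_veh m z"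
  have "det (Mx 0 z) > 0" using pos by simp
  hence "f_obj H1 H2 ?A (Kmat n1 n2 N) = ln (det (Mx 0 z)) - ln (det (Kmat n1 n2 N)) - ln (det (Mx 1 z))"
    using f_obj_eq[OF H1 H2 mat_of_veh_carrier Kmat_carrier pos_def_det_pos[OF K]]
    unfolding Mx_def H_def W2_def by simp
  moreover have "(\<Sum>j\<in>{1..J}. (1 / t) * ln (det (Mx (j + 3) z))) =
      (\<Sum>j\<in>{1..J}. ln (PI j - mtrace (W3 j * ?A)) / t)"
    by (intro sum.cong refl) (simp add: Mx_def det_mat_1)
  ultimately show "f_bar H1 H2 J W3 PT PI t ?A (Kmat n1 n2 N) =
    - ln (det (Kmat n1 n2 N)) - ln (det (Kmat n1 n2 N)) / t +
    (\<Sum>k\<in>{0..J+3}. (if k = 0 then 1 else if k = 1 then -1 else 1 / t) * ln (det (Mx k z)))"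
    unfolding f_bar_def sum_split_first_four by (simp add: Mx_def det_mat_1)
qed auto

lemma Mx_det_pos: "\<forall>k\<in>{0..J+3}. det (Mx k (veh m R)) > 0"
proof
  fix k assume k: "k \<in> {0..J+3}"
  have R_veh: "mat_of_veh m (veh m R) = R" by (rule mat_of_veh_veh[OF R_carrier pos_def_sym[OF R]])
  consider "k = 0" | "k = 1" | "k = 2" | "k = 3" | "k > 3" by linarith
  thus "det (Mx k (veh m R)) > 0"
  proof cases
    case 5
    hence "k - 3 \<in> {1..J}" using k by auto
    thus ?thesis using 5 trace_W3_R unfolding Mx_def R_veh by (auto simp: det_mat_1)
  qed (use pos_def_det_pos[OF Sigma_pos_def] det_one_add_W2_R_pos pos_def_det_pos[OF R] trace_R in
      \<open>auto simp: Mx_def R_veh C_def det_mat_1\<close>)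
qed

lemma Dx_lincomb:
  fixes v :: "real vec"
  defines "d \<equiv> m * (m + 1) div 2"
  assumes v: "v \<in> carrier_vec d"
  defines "V \<equiv> mat_of_veh m (\<lambda>k. v $ k)"
  shows "mat (dimx 0) (dimx 0) (\<lambda>(a,b). \<Sum>i<d. v $ i * Dx 0 i $$ (a,b)) = H * V * transpose_mat H"
    and "mat (dimx 1) (dimx 1) (\<lambda>(a,b). \<Sum>i<d. v $ i * Dx 1 i $$ (a,b)) = W2 * V"
    and "mat (dimx 2) (dimx 2) (\<lambda>(a,b). \<Sum>i<d. v $ i * Dx 2 i $$ (a,b)) = V"
proof -
  have Vc: "V \<in> carrier_mat m m" and Ec: "\<And>i. Ex i \<in> carrier_mat m m" unfolding V_def Ex_def by simp_all
  have V: "mat m m (\<lambda>(a,b). \<Sum>i<d. v $ i * Ex i $$ (a,b)) = V"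
    unfolding V_def Ex_def d_def by (rule mat_of_veh_lincomb[OF v[unfolded d_def]])
  hence VE: "V $$ (a,b) = (\<Sum>i<d. v $ i * Ex i $$ (a,b))" if "a < m" "b < m" for a b
    using that by auto
  show "mat (dimx 0) (dimx 0) (\<lambda>(a,b). \<Sum>i<d. v $ i * Dx 0 i $$ (a,b)) = H * V * transpose_mat H"
    unfolding Dx_def dimx_def
    by (simp, rule mat_lincomb_sandwich[of _ "n1 + n2" m]) (use H_carrier Vc Ec VE in auto)
  have "mat m m (\<lambda>(a,b). \<Sum>i<d. v $ i * (W2 * Ex i * 1\<^sub>m m) $$ (a,b)) = W2 * V * 1\<^sub>m m"
    by (rule mat_lincomb_sandwich[of _ m m _ m]) (use W2_carrier Vc Ec VE in auto)
  moreover have "W2 * Ex i * 1\<^sub>m m = W2 * Ex i" for i using W2_carrier Ec[of i] by simp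
  ultimately show "mat (dimx 1) (dimx 1) (\<lambda>(a,b). \<Sum>i<d. v $ i * Dx 1 i $$ (a,b)) = W2 * V"
    unfolding Dx_def dimx_def using W2_carrier Vc by simp
  show "mat (dimx 2) (dimx 2) (\<lambda>(a,b). \<Sum>i<d. v $ i * Dx 2 i $$ (a,b)) = V"
    unfolding Dx_def dimx_def using V by simp
qed

theorem x_hessian_nonsingular:
  "det (hessian (\<lambda>x. f_bar H1 H2 J W3 PT PI t (mat_of_veh m x) (Kmat n1 n2 N))
     (m * (m + 1) div 2) (veh m R)) \<noteq> 0"
proof -
  interpret X: ln_det_sum "{0..J+3}" dimx Mx Dx "- ln (det (Kmat n1 n2 N)) - ln (det (Kmat n1 n2 N)) / t"
     "\<lambda>k. if k = 0 then 1 else if k = 1 then -1 else 1 / t"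
     "\<lambda>x. f_bar H1 H2 J W3 PT PI t (mat_of_veh m x) (Kmat n1 n2 N)"
    by (rule x_ln_det_sum)
  let ?g = "\<lambda>x. f_bar H1 H2 J W3 PT PI t (mat_of_veh m x) (Kmat n1 n2 N)"
  let ?d = "m * (m + 1) div 2"
  have R_veh: "mat_of_veh m (veh m R) = R" by (rule mat_of_veh_veh[OF R_carrier pos_def_sym[OF R]])
  show ?thesis
  proof (rule det_neq_0_if_quad_form_neq_0)
    fix v :: "real vec" assume v: "v \<in> carrier_vec ?d" "v \<noteq> 0\<^sub>v ?d"
    define V where "V = mat_of_veh m (\<lambda>k. v $ k)"
    have Vc: "V \<in> carrier_mat m m" and Vs: "transpose_mat V = V"
      unfolding V_def by (simp_all add: transpose_mat_of_veh)
    have Vnz: "V \<noteq> 0\<^sub>m m m" unfolding V_def by (rule mat_of_veh_neq_0[OF v])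
    define Dv where "Dv k = mat (dimx k) (dimx k) (\<lambda>(a,b). \<Sum>i<?d. v $ i * Dx k i $$ (a,b))" for k
    define T where "T k = mtrace (mat_inv (Mx k (veh m R)) * Dv k * mat_inv (Mx k (veh m R)) * Dv k)" for k
    have form: "v \<bullet> (hessian ?g ?d (veh m R) *\<^sub>v v) =
        - (T 0 - T 1 + (T 2 + T 3 + (\<Sum>j\<in>{1..J}. T (j + 3))) / t)"
      using X.hessian_quadratic_form[OF Mx_det_pos v(1)]
      unfolding T_def[symmetric] Dv_def[symmetric] sum_split_first_four
      by (simp add: sum_divide_distrib add_divide_distrib)
    have T01: "T 1 \<le> T 0"
      using mtrace_W2_sandwich_le[OF Vc Vs] Dx_lincomb(1,2)[OF v(1)]
      unfolding T_def Dv_def V_def Mx_def R_veh C_def by simp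
    have T2: "T 2 > 0"
      using mtrace_sandwich_pos[OF pos_def_mat_inv[OF R] Vc Vs Vnz] Dx_lincomb(3)[OF v(1)]
      unfolding T_def Dv_def V_def Mx_def R_veh by simp
    have "T k \<ge> 0" if "k \<in> {0..J+3}" "k \<ge> 3" for k
    proof -
      have "dimx k = 1" unfolding dimx_def using that by auto
      hence "mat_inv (Mx k (veh m R)) \<in> carrier_mat 1 1" "Dv k \<in> carrier_mat 1 1"
        using Mx_carrier[OF that(1)] unfolding Dv_def by auto
      thus ?thesis unfolding T_def by (rule mtrace_sandwich_nonneg_1)
    qed
    hence "T 3 \<ge> 0" "(\<Sum>j\<in>{1..J}. T (j + 3)) \<ge> 0" by (auto intro!: sum_nonneg)
    hence "(T 2 + T 3 + (\<Sum>j\<in>{1..J}. T (j + 3))) / t > 0" using T2 t by (intro divide_pos_pos) auto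
    hence "v \<bullet> (hessian ?g ?d (veh m R) *\<^sub>v v) < 0" unfolding form using T01 by linarith
    thus "v \<bullet> (hessian ?g ?d (veh m R) *\<^sub>v v) \<noteq> 0" by simp
  qed (simp add: hessian_def)
qed

end

theorem lemma1:
  fixes m n1 n2 J :: nat
    and H1 H2 :: "real mat" and H3 :: "nat \<Rightarrow> real mat" and n3 :: "nat \<Rightarrow> nat"
    and PT t :: real and PI :: "nat \<Rightarrow> real"
    and R N :: "real mat"
  assumes "m \<ge> 1" "n1 \<ge> 1" "n2 \<ge> 1"
    and "H1 \<in> carrier_mat n1 m" "H2 \<in> carrier_mat n2 m"
    and "\<forall>j\<in>{1..J}. n3 j \<ge> 1 \<and> H3 j \<in> carrier_mat (n3 j) m"
    and "PT > 0" "\<forall>j\<in>{1..J}. PI j > 0"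
    and "t > 0"
    and "R \<in> SR m PT J (\<lambda>j. transpose_mat (H3 j) * H3 j) PI"
    and "N \<in> carrier_mat n1 n2" "Kmat n1 n2 N \<in> SK n1 n2"
  shows "det (hessian
            (\<lambda>x. f_bar H1 H2 J (\<lambda>j. transpose_mat (H3 j) * H3 j) PT PI t
                   (mat_of_veh m x) (Kmat n1 n2 N))
            (m * (m + 1) div 2) (veh m R)) \<noteq> 0
       \<and> det (hessian
            (\<lambda>y. f_bar H1 H2 J (\<lambda>j. transpose_mat (H3 j) * H3 j) PT PI t
                   R (Kmat n1 n2 (mat_of_vecm n1 n2 y)))
            (n1 * n2) (vecm n1 N)) \<noteq> 0"
proof -
  interpret barrier_point_constraints n1 n2 m H1 H2 R N J "\<lambda>j. transpose_mat (H3 j) * H3 j" PT t PI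
  proof
    show "pos_def m R" "mtrace R < PT"
      "\<forall>j\<in>{1..J}. mtrace (transpose_mat (H3 j) * H3 j * R) < PI j"
      using \<open>R \<in> SR m PT J _ PI\<close> unfolding SR_def by auto
    show "pos_def (n1 + n2) (Kmat n1 n2 N)" using \<open>Kmat n1 n2 N \<in> SK n1 n2\<close> unfolding SK_def by auto
    show "\<forall>j\<in>{1..J}. transpose_mat (H3 j) * H3 j \<in> carrier_mat m m"
      using \<open>\<forall>j\<in>{1..J}. n3 j \<ge> 1 \<and> H3 j \<in> carrier_mat (n3 j) m\<close> by auto
  qed (use assms in auto)
  show ?thesis using x_hessian_nonsingular y_hessian_nonsingular[OF \<open>t > 0\<close>] by blast
qed

end
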